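(* Let $n$ be a positive integer, let $L/K_P$ be a finite extension, and let $\alpha\in K_P^+$ satisfy $v_L(\alpha)\in n\mathbb{Z}$. Then there exists a finite purely inseparable extension $L_1/L$ such that the unique $n$-th root $\alpha^{1/n}\in\mathbb{C}_P^+$ lies in $L_1^+$.
   Context: $X$ is a smooth projective curve over a finite field of characteristic $p$, $P$ a closed point, $K_P$ the completion of its function field at $P$, $\mathbb{C}_P$ the completion of an algebraic closure of $K_P$; all extensions of $K_P$ lie in $\mathbb{C}_P$. For a complete extension $L$ of $K_P$, $\mu_L$ denotes the roots of unity in $L$ and $L^+=L^\times/\mu_L$ is the group of positive numbers; for $L'\subseteq L$ one has $L'^+\subseteq L^+\subseteq\mathbb{C}_P^+$. The group $\mathbb{C}_P^+$ is uniquely divisible. For $L/K_P$ finite, $v_L=e_{L/K_P}v_P$ is the normalized valuation of $L$ (extended to $\mathbb{C}_P$), which is well defined on positive numbers. *)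

theory Defs
  imports "HOL-Computational_Algebra.Primes" "HOL-Algebra.Algebraic_Closure" "HOL-Algebra.Finite_Extensions" "HOL-Algebra.Embedded_Algebras"
begin

text \<open>Ambient field R plays the role of C_P, with an additive valuation
  v (only meaningful on nonzero elements), normalized later so that v(K_P^x) = Z.\<close>

definition is_valuation :: "('a, 'b) ring_scheme \<Rightarrow> ('a \<Rightarrow> real) \<Rightarrow> bool" where
  "is_valuation R v \<longleftrightarrow>
     (\<forall>x \<in> carrier R - {\<zero>\<^bsub>R\<^esub>}. \<forall>y \<in> carrier R - {\<zero>\<^bsub>R\<^esub>}.
        v (x \<otimes>\<^bsub>R\<^esub> y) = v x + v y \<and>
        (x \<oplus>\<^bsub>R\<^esub> y \<noteq> \<zero>\<^bsub>R\<^esub> \<longrightarrow> v (x \<oplus>\<^bsub>R\<^esub> y) \<ge> min (v x) (v y)))"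

text \<open>x is close to y: distance at most exp(-M), i.e. x = y or v(x - y) >= M.\<close>
definition vclose :: "('a, 'b) ring_scheme \<Rightarrow> ('a \<Rightarrow> real) \<Rightarrow> real \<Rightarrow> 'a \<Rightarrow> 'a \<Rightarrow> bool" where
  "vclose R v M x y \<longleftrightarrow> x = y \<or> v (x \<ominus>\<^bsub>R\<^esub> y) \<ge> M"

definition vcauchy :: "('a, 'b) ring_scheme \<Rightarrow> ('a \<Rightarrow> real) \<Rightarrow> (nat \<Rightarrow> 'a) \<Rightarrow> bool" where
  "vcauchy R v f \<longleftrightarrow> (\<forall>M. \<exists>N. \<forall>m\<ge>N. \<forall>n\<ge>N. vclose R v M (f m) (f n))"

definition vconverges :: "('a, 'b) ring_scheme \<Rightarrow> ('a \<Rightarrow> real) \<Rightarrow> (nat \<Rightarrow> 'a) \<Rightarrow> 'a \<Rightarrow> bool" where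
  "vconverges R v f x \<longleftrightarrow> (\<forall>M. \<exists>N. \<forall>n\<ge>N. vclose R v M (f n) x)"

definition vcomplete :: "('a, 'b) ring_scheme \<Rightarrow> ('a \<Rightarrow> real) \<Rightarrow> 'a set \<Rightarrow> bool" where
  "vcomplete R v S \<longleftrightarrow>
     (\<forall>f. (\<forall>n. f n \<in> S) \<and> vcauchy R v f \<longrightarrow> (\<exists>x \<in> S. vconverges R v f x))"

definition vdense :: "('a, 'b) ring_scheme \<Rightarrow> ('a \<Rightarrow> real) \<Rightarrow> 'a set \<Rightarrow> 'a set \<Rightarrow> bool" where
  "vdense R v D S \<longleftrightarrow> (\<forall>x \<in> S. \<forall>M. \<exists>y \<in> D. vclose R v M y x)"

definition finite_residue_field :: "('a, 'b) ring_scheme \<Rightarrow> ('a \<Rightarrow> real) \<Rightarrow> 'a set \<Rightarrow> bool" where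
  "finite_residue_field R v K \<longleftrightarrow>
     (\<exists>F. finite F \<and> F \<subseteq> K \<and>
        (\<forall>x \<in> K. (x = \<zero>\<^bsub>R\<^esub> \<or> v x \<ge> 0) \<longrightarrow>
           (\<exists>s \<in> F. x = s \<or> v (x \<ominus>\<^bsub>R\<^esub> s) > 0)))"

text \<open>Standing setup: R = C_P (algebraically closed, complete, of characteristic p,
  the completion of the algebraic closure of K = K_P), K = K_P a local field of
  characteristic p (complete, discretely valued with v normalized so v(K^x) = Z,
  finite residue field). Such K are exactly the completions K_P of function fields of
  smooth projective curves over finite fields at closed points.\<close>
definition CP_setup :: "('a, 'b) ring_scheme \<Rightarrow> ('a \<Rightarrow> real) \<Rightarrow> nat \<Rightarrow> 'a set \<Rightarrow> bool" where
  "CP_setup R v p K \<longleftrightarrow>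
     field R \<and> algebraically_closed R \<and> Factorial_Ring.prime p \<and> [p] \<cdot>\<^bsub>R\<^esub> \<one>\<^bsub>R\<^esub> = \<zero>\<^bsub>R\<^esub> \<and>
     is_valuation R v \<and> vcomplete R v (carrier R) \<and>
     subfield K R \<and> v ` (K - {\<zero>\<^bsub>R\<^esub>}) = range real_of_int \<and>
     vcomplete R v K \<and> finite_residue_field R v K \<and>
     vdense R v {x \<in> carrier R. \<not> ring.transcendental R K x} (carrier R)"

definition finite_ext :: "('a, 'b) ring_scheme \<Rightarrow> 'a set \<Rightarrow> 'a set \<Rightarrow> bool" where
  "finite_ext R K L \<longleftrightarrow> subfield L R \<and> K \<subseteq> L \<and> ring.finite_dimension R K L"

definition purely_insep_finite_ext :: "('a, 'b) ring_scheme \<Rightarrow> nat \<Rightarrow> 'a set \<Rightarrow> 'a set \<Rightarrow> bool" where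
  "purely_insep_finite_ext R p L L1 \<longleftrightarrow>
     finite_ext R L L1 \<and> (\<forall>x \<in> L1. \<exists>k::nat. x [^]\<^bsub>R\<^esub> (p ^ k) \<in> L)"

definition ram_index :: "('a, 'b) ring_scheme \<Rightarrow> ('a \<Rightarrow> real) \<Rightarrow> 'a set \<Rightarrow> nat" where
  "ram_index R v L = (THE e::nat. e > 0 \<and>
       v ` (L - {\<zero>\<^bsub>R\<^esub>}) = {real_of_int k / real e | k. True})"

definition vL :: "('a, 'b) ring_scheme \<Rightarrow> ('a \<Rightarrow> real) \<Rightarrow> 'a set \<Rightarrow> 'a \<Rightarrow> real" where
  "vL R v L x = real (ram_index R v L) * v x"

definition root_of_unity :: "('a, 'b) ring_scheme \<Rightarrow> 'a \<Rightarrow> bool" where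
  "root_of_unity R z \<longleftrightarrow> z \<in> carrier R \<and> (\<exists>m::nat. m > 0 \<and> z [^]\<^bsub>R\<^esub> m = \<one>\<^bsub>R\<^esub>)"

text \<open>The positive number (element of C_P^+ = C_P^x / mu) represented by x.\<close>
definition pos_class :: "('a, 'b) ring_scheme \<Rightarrow> 'a \<Rightarrow> 'a set" where
  "pos_class R x = {y \<in> carrier R - {\<zero>\<^bsub>R\<^esub>}. root_of_unity R (y \<otimes>\<^bsub>R\<^esub> inv\<^bsub>R\<^esub> x)}"

end

theory Submission
  imports Defs
begin

text \<open>
  Write \<open>n = p\<^sup>s m\<close> with \<open>p\<close> not dividing \<open>m\<close>. Elements of \<open>L\<close> whose valuations are pairwise
  incongruent modulo \<open>\<int>\<close> are linearly independent over \<open>K\<close>, so the value group of \<open>L\<close> is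
  \<open>(1/e)\<int>\<close>; hence \<open>a = \<pi>\<^sup>n u\<close> with \<open>\<pi> \<in> L\<close> and \<open>u\<close> a unit of \<open>L\<close>. Since the residue field of
  \<open>L\<close> is finite, some power \<open>z\<^sup>N\<close> of \<open>z = u\<^sup>-\<^sup>1\<close>, with \<open>p\<close> not dividing \<open>N\<close>, is congruent to \<open>1\<close>.
  For a power \<open>q\<close> of \<open>p\<close> with \<open>q \<equiv> 1\<close> modulo \<open>N m\<close>, the sequence \<open>z\<^bsup>q\<^sup>t\<^esup>\<close> converges in the
  complete field \<open>L\<close> to a root of unity, and the quotients \<open>z\<^bsup>q\<^sup>t\<^esup> / z\<close> are \<open>m\<close>-th powers of a
  sequence converging to some \<open>c \<in> L\<close>; thus \<open>c\<^sup>m / u\<close> is a root of unity. Adjoining a \<open>p\<^sup>s\<close>-th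
  root \<open>b\<^sub>0\<close> of \<open>c\<close> gives a purely inseparable extension \<open>L\<^sub>1\<close> of \<open>L\<close> (Frobenius is additive),
  and \<open>b = \<pi> b\<^sub>0\<close> satisfies \<open>b\<^sup>n = a \<cdot> c\<^sup>m / u\<close>.
\<close>

section \<open>Frobenius in characteristic \<open>p\<close>\<close>

lemma (in cring) binomial_expansion:
  assumes x: "x \<in> carrier R" and y: "y \<in> carrier R"
  shows "(x \<oplus> y) [^] n = (\<Oplus>k\<in>{..n}. [(n choose k)] \<cdot> (x [^] k \<otimes> y [^] (n - k)))"
proof (induct n)
  case 0
  then show ?case using x y by simp
next
  case (Suc n)
  define A where "A k = [(n choose k)] \<cdot> (x [^] Suc k \<otimes> y [^] (n - k))" for k
  define B where "B k = [(n choose k)] \<cdot> (x [^] k \<otimes> y [^] (Suc n - k))" for k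
  have AB: "A k \<in> carrier R" "B k \<in> carrier R" for k
    unfolding A_def B_def using x y by auto
  have "(x \<oplus> y) [^] Suc n = x \<otimes> (x \<oplus> y) [^] n \<oplus> y \<otimes> (x \<oplus> y) [^] n"
    using x y by (simp add: m_comm l_distr)
  also have "x \<otimes> (x \<oplus> y) [^] n = (\<Oplus>k\<in>{..n}. A k)"
    unfolding Suc A_def using x y
    by (simp add: finsum_rdistr) (intro finsum_cong', auto simp: add_pow_rdistr m_ac)
  also have "y \<otimes> (x \<oplus> y) [^] n = (\<Oplus>k\<in>{..n}. B k)"
    unfolding Suc B_def using x y
    by (simp add: finsum_rdistr) (intro finsum_cong', auto simp: add_pow_rdistr m_ac Suc_diff_le)
  also have "(\<Oplus>k\<in>{..n}. B k) = (\<Oplus>k\<in>{..Suc n}. B k)"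
    using AB finsum_Suc[of B n] by (simp add: B_def[of "Suc n"] binomial_eq_0 finsum_closed)
  also have "\<dots> = B 0 \<oplus> (\<Oplus>k\<in>{..n}. B (Suc k))"
    using AB finsum_Suc2[of B n] by (simp add: a_comm finsum_closed)
  finally have "(x \<oplus> y) [^] Suc n = B 0 \<oplus> ((\<Oplus>k\<in>{..n}. A k) \<oplus> (\<Oplus>k\<in>{..n}. B (Suc k)))"
    using AB by (simp add: a_ac)
  also have "(\<Oplus>k\<in>{..n}. A k) \<oplus> (\<Oplus>k\<in>{..n}. B (Suc k)) = (\<Oplus>k\<in>{..n}. A k \<oplus> B (Suc k))"
    using AB by (simp add: finsum_addf)
  also have "\<dots> = (\<Oplus>k\<in>{..n}. [(Suc n choose Suc k)] \<cdot> (x [^] Suc k \<otimes> y [^] (Suc n - Suc k)))"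
    using x y by (intro finsum_cong') (auto simp: A_def B_def add.nat_pow_mult)
  also have "B 0 \<oplus> \<dots> = (\<Oplus>k\<in>{..Suc n}. [(Suc n choose k)] \<cdot> (x [^] k \<otimes> y [^] (Suc n - k)))"
    using x y finsum_Suc2[of "\<lambda>k. [(Suc n choose k)] \<cdot> (x [^] k \<otimes> y [^] (Suc n - k))" n]
    by (simp add: B_def a_comm)
  finally show ?case .
qed

locale char_p_cring = cring R for R (structure) +
  fixes p :: nat
  assumes prime_p: "Factorial_Ring.prime p"
    and char_p: "[p] \<cdot> \<one> = \<zero>"
begin

lemma add_pow_eq_zero_if_dvd:
  assumes w: "w \<in> carrier R" and "p dvd c"
  shows "[c] \<cdot> w = \<zero>"
proof -
  obtain j where "c = p * j" using \<open>p dvd c\<close> by blast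
  then have "[c] \<cdot> w = [j] \<cdot> (([p] \<cdot> \<one>) \<otimes> w)"
    using w by (simp add: add_pow_ldistr add.nat_pow_pow mult.commute)
  then show ?thesis using w char_p by simp
qed

lemma frobenius_add:
  assumes x: "x \<in> carrier R" and y: "y \<in> carrier R"
  shows "(x \<oplus> y) [^] p = x [^] p \<oplus> y [^] p"
proof -
  define f where "f k = [(p choose k)] \<cdot> (x [^] k \<otimes> y [^] (p - k))" for k
  have fc: "f k \<in> carrier R" for k unfolding f_def using x y by simp
  obtain r where r: "p = Suc (Suc r)"
    using prime_gt_1_nat[OF prime_p] by (metis less_imp_Suc_add add_Suc_right plus_1_eq_Suc)
  have middle: "f (Suc k) = \<zero>" if "k \<le> r" for k
  proof -
    have "p dvd (p choose Suc k)" using prime_p that r by (intro dvd_choose_prime) auto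
    then show ?thesis unfolding f_def using x y by (simp add: add_pow_eq_zero_if_dvd)
  qed
  have "(x \<oplus> y) [^] p = (\<Oplus>k\<in>{..Suc (Suc r)}. f k)" unfolding f_def r by (rule binomial_expansion[OF x y])
  also have "\<dots> = f p \<oplus> ((\<Oplus>k\<in>{..r}. f (Suc k)) \<oplus> f 0)"
    using fc r finsum_Suc[of f "Suc r"] finsum_Suc2[of f r] by (simp del: finsum_Suc)
  also have "(\<Oplus>k\<in>{..r}. f (Suc k)) = (\<Oplus>k\<in>{..r}. \<zero>)" using middle by (intro finsum_cong') auto
  finally show ?thesis using x y fc by (simp add: f_def)
qed

lemma frobenius_pow_add:
  assumes x: "x \<in> carrier R" and y: "y \<in> carrier R"
  shows "(x \<oplus> y) [^] (p ^ k) = x [^] (p ^ k) \<oplus> y [^] (p ^ k)"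
proof (induct k)
  case (Suc k)
  have "(x \<oplus> y) [^] (p ^ Suc k) = ((x \<oplus> y) [^] (p ^ k)) [^] p"
    using x y by (simp add: nat_pow_pow mult.commute)
  also have "\<dots> = (x [^] (p ^ k)) [^] p \<oplus> (y [^] (p ^ k)) [^] p"
    unfolding Suc using x y by (simp add: frobenius_add)
  also have "\<dots> = x [^] (p ^ Suc k) \<oplus> y [^] (p ^ Suc k)"
    using x y by (simp add: nat_pow_pow mult.commute)
  finally show ?case .
qed (use x y in simp)

lemma frobenius_pow_diff:
  assumes x: "x \<in> carrier R" and y: "y \<in> carrier R"
  shows "(x \<ominus> y) [^] (p ^ k) = x [^] (p ^ k) \<ominus> y [^] (p ^ k)"
proof -
  have "x [^] (p ^ k) = ((x \<ominus> y) \<oplus> y) [^] (p ^ k)"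
    using x y by (simp add: minus_eq a_assoc l_neg)
  also have "\<dots> = (x \<ominus> y) [^] (p ^ k) \<oplus> y [^] (p ^ k)"
    using x y by (simp add: frobenius_pow_add)
  finally show ?thesis using x y by (simp add: minus_eq a_assoc r_neg)
qed

end

section \<open>Roots of unity and \<open>n\<close>-th roots\<close>

context field
begin

lemma nonzero_mult: "x \<in> carrier R \<Longrightarrow> y \<in> carrier R \<Longrightarrow> x \<noteq> \<zero> \<Longrightarrow> y \<noteq> \<zero> \<Longrightarrow> x \<otimes> y \<noteq> \<zero>"
  using integral by blast

lemma nonzero_pow: "x \<in> carrier R \<Longrightarrow> x \<noteq> \<zero> \<Longrightarrow> x [^] (n::nat) \<noteq> \<zero>"
  by (induct n) (auto simp: nonzero_mult)

lemma inv_nonzero: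
  assumes "x \<in> carrier R" "x \<noteq> \<zero>"
  shows "inv x \<in> carrier R" "inv x \<noteq> \<zero>" "inv x \<otimes> x = \<one>" "x \<otimes> inv x = \<one>"
  using assms field_Units Units_l_inv Units_r_inv Units_inv_closed
  by (metis Diff_iff empty_iff insert_iff l_null one_not_zero)+

lemma root_of_unity_nonzero: "root_of_unity R z \<Longrightarrow> z \<noteq> \<zero>"
  unfolding root_of_unity_def by (metis nat_pow_zero less_not_refl2 one_not_zero)

lemma root_of_unity_mult:
  assumes "root_of_unity R x" "root_of_unity R y"
  shows "root_of_unity R (x \<otimes> y)"
proof -
  obtain a b :: nat where ab: "a > 0" "x [^] a = \<one>" "b > 0" "y [^] b = \<one>" "x \<in> carrier R" "y \<in> carrier R"
    using assms unfolding root_of_unity_def by blast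
  have "x [^] (a * b) = \<one>" using ab nat_pow_pow[of x a b] by simp
  moreover have "y [^] (a * b) = \<one>" using ab nat_pow_pow[of y b a] by (simp add: mult.commute)
  ultimately have "(x \<otimes> y) [^] (a * b) = \<one>" using ab by (simp add: nat_pow_distrib)
  then show ?thesis unfolding root_of_unity_def using ab by (intro conjI exI[of _ "a * b"]) auto
qed

lemma root_of_unity_inv:
  assumes "root_of_unity R x"
  shows "root_of_unity R (inv x)"
proof -
  obtain a :: nat where a: "a > 0" "x [^] a = \<one>" "x \<in> carrier R"
    using assms unfolding root_of_unity_def by blast
  note ix = inv_nonzero[OF a(3) root_of_unity_nonzero[OF assms]]
  have "x [^] a \<otimes> inv x [^] a = \<one>"
    using ix a(3) nat_pow_distrib[of x "inv x" a] by simp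
  then have "inv x [^] a = \<one>" using a ix by simp
  then show ?thesis unfolding root_of_unity_def using a ix by blast
qed

lemma pos_class_mult_root_of_unity:
  assumes x: "x \<in> carrier R" "x \<noteq> \<zero>" and z: "root_of_unity R z"
  shows "pos_class R (x \<otimes> z) = pos_class R x"
proof -
  have zc: "z \<in> carrier R" using z unfolding root_of_unity_def by auto
  note ix = inv_nonzero[OF x] and iz = inv_nonzero[OF zc root_of_unity_nonzero[OF z]]
  have inv_xz: "inv (x \<otimes> z) = inv x \<otimes> inv z"
    using x zc ix iz by (intro comm_inv_char) (simp_all add: m_ac)
  have "root_of_unity R (y \<otimes> inv (x \<otimes> z)) \<longleftrightarrow> root_of_unity R (y \<otimes> inv x)"
    if y: "y \<in> carrier R" for y
  proof
    assume "root_of_unity R (y \<otimes> inv (x \<otimes> z))"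
    then have "root_of_unity R ((y \<otimes> inv (x \<otimes> z)) \<otimes> z)" using z root_of_unity_mult by blast
    moreover have "(y \<otimes> inv (x \<otimes> z)) \<otimes> z = y \<otimes> inv x"
      unfolding inv_xz using y zc ix iz by (simp add: m_assoc)
    ultimately show "root_of_unity R (y \<otimes> inv x)" by simp
  next
    assume "root_of_unity R (y \<otimes> inv x)"
    then have "root_of_unity R ((y \<otimes> inv x) \<otimes> inv z)"
      using root_of_unity_inv[OF z] root_of_unity_mult by blast
    then show "root_of_unity R (y \<otimes> inv (x \<otimes> z))"
      unfolding inv_xz using y zc ix iz by (simp add: m_assoc)
  qed
  then show ?thesis unfolding pos_class_def by auto
qed

end

text \<open>The polynomial \<open>X\<^sup>k - c\<close>, as a coefficient list with the leading coefficient first.\<close>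

definition (in ring) pow_minus_poly :: "nat \<Rightarrow> 'a \<Rightarrow> 'a list" where
  "pow_minus_poly k c = monom \<one> (k - 1) @ [\<ominus> c]"

lemma (in domain) pow_minus_poly_carrier:
  assumes "subring S R" "c \<in> S" "k > 0"
  shows "pow_minus_poly k c \<in> carrier (S[X])"
  using assms subringE[OF assms(1)]
  unfolding pow_minus_poly_def univ_poly_def polynomial_def monom_def by auto

lemma (in ring) degree_pow_minus_poly: "k > 0 \<Longrightarrow> degree (pow_minus_poly k c) = k"
  unfolding pow_minus_poly_def monom_def by simp

lemma (in ring) eval_pow_minus_poly:
  assumes "c \<in> carrier R" "x \<in> carrier R" "k > 0"
  shows "eval (pow_minus_poly k c) x = x [^] k \<ominus> c"
proof -
  have "eval (pow_minus_poly k c) x = eval (monom \<one> (k - 1)) x \<otimes> x \<oplus> \<ominus> c"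
    unfolding pow_minus_poly_def by (rule eval_append_aux) (use assms in \<open>auto simp: monom_def\<close>)
  also have "\<dots> = x [^] k \<ominus> c"
    using eval_monom[of \<one> x "k - 1"] assms by (simp add: minus_eq nat_pow_Suc[symmetric])
  finally show ?thesis .
qed

lemma (in field) nth_root_exists:
  assumes "algebraically_closed R" and c: "c \<in> carrier R" and k: "k > 0"
  shows "\<exists>b\<in>carrier R. b [^] (k::nat) = c"
proof -
  let ?P = "pow_minus_poly k c"
  have P: "?P \<in> carrier (poly_ring R)"
    using pow_minus_poly_carrier[OF carrier_is_subring c k] .
  have "size (roots ?P) = k"
    using algebraically_closed.roots_over_carrier[OF assms(1) P] degree_pow_minus_poly[OF k] unfolding splitted_def by simp
  then obtain x where "x \<in># roots ?P" using k by (metis size_empty less_not_refl multiset_nonemptyE)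
  then have x: "x \<in> carrier R" "eval ?P x = \<zero>"
    using roots_mem_iff_is_root[OF P] unfolding is_root_def by auto
  then have "x [^] k = c" using eval_pow_minus_poly[OF c x(1) k] r_right_minus_eq c by simp
  then show ?thesis using x by blast
qed

section \<open>Valued fields\<close>

locale valued_field = field R for R (structure) +
  fixes v :: "'a \<Rightarrow> real"
  assumes valuation: "is_valuation R v"
begin

lemma val_mult:
  "x \<in> carrier R \<Longrightarrow> y \<in> carrier R \<Longrightarrow> x \<noteq> \<zero> \<Longrightarrow> y \<noteq> \<zero> \<Longrightarrow> v (x \<otimes> y) = v x + v y"
  using valuation unfolding is_valuation_def by auto

lemma val_add_ge_min:
  "x \<in> carrier R \<Longrightarrow> y \<in> carrier R \<Longrightarrow> x \<noteq> \<zero> \<Longrightarrow> y \<noteq> \<zero> \<Longrightarrow> x \<oplus> y \<noteq> \<zero> \<Longrightarrow>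
   min (v x) (v y) \<le> v (x \<oplus> y)"
  using valuation unfolding is_valuation_def by auto

lemma val_one: "v \<one> = 0"
  using val_mult[of \<one> \<one>] by simp

lemma val_uminus:
  assumes "x \<in> carrier R" "x \<noteq> \<zero>"
  shows "v (\<ominus> x) = v x"
proof -
  have m1: "\<ominus> \<one> \<otimes> \<ominus> \<one> = \<one>" "\<ominus> x = \<ominus> \<one> \<otimes> x" using assms by algebra+
  then have "\<ominus> \<one> \<noteq> \<zero>" by (metis l_null a_inv_closed one_closed zero_not_one)
  then have "v (\<ominus> \<one>) = 0" using val_mult[of "\<ominus> \<one>" "\<ominus> \<one>"] m1 val_one by simp
  then show ?thesis using val_mult[of "\<ominus> \<one>" x] assms m1 \<open>\<ominus> \<one> \<noteq> \<zero>\<close> by simp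
qed

lemma val_inv: "x \<in> carrier R \<Longrightarrow> x \<noteq> \<zero> \<Longrightarrow> v (inv x) = - v x"
  using val_mult[of "inv x" x] inv_nonzero[of x] val_one by simp

lemma val_pow: "x \<in> carrier R \<Longrightarrow> x \<noteq> \<zero> \<Longrightarrow> v (x [^] (n::nat)) = real n * v x"
  by (induct n) (simp_all add: val_one val_mult nonzero_pow algebra_simps)

lemma val_add_eq_left:
  assumes "x \<in> carrier R" "y \<in> carrier R" "x \<noteq> \<zero>" "y \<noteq> \<zero>" "v x < v y"
  shows "x \<oplus> y \<noteq> \<zero>" "v (x \<oplus> y) = v x"
proof -
  show ne: "x \<oplus> y \<noteq> \<zero>"
  proof
    assume "x \<oplus> y = \<zero>"
    then have "y = \<ominus> x" using assms by (metis add.inv_closed a_comm l_neg minus_equality)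
    then show False using val_uminus[of x] assms by simp
  qed
  have "x = (x \<oplus> y) \<oplus> \<ominus> y" using assms by algebra
  then have "min (v (x \<oplus> y)) (v (\<ominus> y)) \<le> v x"
    using val_add_ge_min[of "x \<oplus> y" "\<ominus> y"] assms ne by (metis a_closed a_inv_closed add.inv_eq_1_iff)
  then show "v (x \<oplus> y) = v x"
    using val_uminus[of y] val_add_ge_min[of x y] assms ne by auto
qed

definition val_ge :: "'a \<Rightarrow> real \<Rightarrow> bool" where
  "val_ge x M \<longleftrightarrow> x = \<zero> \<or> M \<le> v x"

definition val_pos :: "'a \<Rightarrow> bool" where
  "val_pos x \<longleftrightarrow> x = \<zero> \<or> 0 < v x"

lemma val_ge_zero [simp]: "val_ge \<zero> M"
  by (simp add: val_ge_def)

lemma val_pos_zero [simp]: "val_pos \<zero>"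
  by (simp add: val_pos_def)

lemma val_ge_mono: "val_ge x M \<Longrightarrow> M' \<le> M \<Longrightarrow> val_ge x M'"
  by (auto simp: val_ge_def)

lemma val_ge_add:
  "x \<in> carrier R \<Longrightarrow> y \<in> carrier R \<Longrightarrow> val_ge x M \<Longrightarrow> val_ge y M \<Longrightarrow> val_ge (x \<oplus> y) M"
  using val_add_ge_min[of x y] unfolding val_ge_def by (cases "x = \<zero>"; cases "y = \<zero>"; force)

lemma val_pos_add:
  "x \<in> carrier R \<Longrightarrow> y \<in> carrier R \<Longrightarrow> val_pos x \<Longrightarrow> val_pos y \<Longrightarrow> val_pos (x \<oplus> y)"
  using val_add_ge_min[of x y] unfolding val_pos_def by (cases "x = \<zero>"; cases "y = \<zero>"; force)

lemma val_ge_uminus_iff: "x \<in> carrier R \<Longrightarrow> val_ge (\<ominus> x) M \<longleftrightarrow> val_ge x M"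
  unfolding val_ge_def by (metis add.inv_eq_1_iff val_uminus)

lemma val_pos_uminus_iff: "x \<in> carrier R \<Longrightarrow> val_pos (\<ominus> x) \<longleftrightarrow> val_pos x"
  unfolding val_pos_def by (metis add.inv_eq_1_iff val_uminus)

lemma val_ge_diff:
  "x \<in> carrier R \<Longrightarrow> y \<in> carrier R \<Longrightarrow> val_ge x M \<Longrightarrow> val_ge y M \<Longrightarrow> val_ge (x \<ominus> y) M"
  using val_ge_add[of x "\<ominus> y" M] val_ge_uminus_iff[of y M] by (simp add: minus_eq)

lemma val_pos_diff:
  "x \<in> carrier R \<Longrightarrow> y \<in> carrier R \<Longrightarrow> val_pos x \<Longrightarrow> val_pos y \<Longrightarrow> val_pos (x \<ominus> y)"
  using val_pos_add[of x "\<ominus> y"] val_pos_uminus_iff[of y] by (simp add: minus_eq)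

lemma val_ge_mult:
  "x \<in> carrier R \<Longrightarrow> y \<in> carrier R \<Longrightarrow> val_ge x M1 \<Longrightarrow> val_ge y M2 \<Longrightarrow> val_ge (x \<otimes> y) (M1 + M2)"
  using val_mult[of x y] unfolding val_ge_def by (cases "x = \<zero>"; cases "y = \<zero>"; auto)

lemma val_ge_mult_nonzero:
  "x \<in> carrier R \<Longrightarrow> y \<in> carrier R \<Longrightarrow> y \<noteq> \<zero> \<Longrightarrow> val_ge x M \<Longrightarrow> val_ge (x \<otimes> y) (M + v y)"
  using val_ge_mult[of x y M "v y"] unfolding val_ge_def by auto

lemma val_pos_mult:
  "x \<in> carrier R \<Longrightarrow> y \<in> carrier R \<Longrightarrow> val_pos x \<Longrightarrow> val_ge y 0 \<Longrightarrow> val_pos (x \<otimes> y)"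
  using val_mult[of x y] nonzero_mult[of x y] unfolding val_pos_def val_ge_def
  by (cases "x = \<zero>"; cases "y = \<zero>"; auto)

lemma val_ge_pow: "y \<in> carrier R \<Longrightarrow> val_ge y d \<Longrightarrow> 0 \<le> d \<Longrightarrow> val_ge (y [^] (n::nat)) (real n * d)"
  using val_pow[of y n] nonzero_pow[of y n] unfolding val_ge_def
  by (cases "n = 0"; cases "y = \<zero>") (auto simp: val_one nat_pow_zero)

lemma val_ge_diff_commute:
  assumes "x \<in> carrier R" "y \<in> carrier R"
  shows "val_ge (x \<ominus> y) M \<longleftrightarrow> val_ge (y \<ominus> x) M"
proof -
  have "y \<ominus> x = \<ominus> (x \<ominus> y)" using assms by algebra
  then show ?thesis using val_ge_uminus_iff[of "x \<ominus> y" M] assms by simp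
qed

lemma val_pos_diff_commute:
  assumes "x \<in> carrier R" "y \<in> carrier R"
  shows "val_pos (x \<ominus> y) \<longleftrightarrow> val_pos (y \<ominus> x)"
proof -
  have "y \<ominus> x = \<ominus> (x \<ominus> y)" using assms by algebra
  then show ?thesis using val_pos_uminus_iff[of "x \<ominus> y"] assms by simp
qed

lemma val_ge_diff_trans:
  assumes "x \<in> carrier R" "y \<in> carrier R" "z \<in> carrier R" "val_ge (x \<ominus> y) M" "val_ge (y \<ominus> z) M"
  shows "val_ge (x \<ominus> z) M"
proof -
  have "x \<ominus> z = (x \<ominus> y) \<oplus> (y \<ominus> z)" using assms by algebra
  then show ?thesis using val_ge_add[of "x \<ominus> y" "y \<ominus> z" M] assms by simp
qed

lemma val_pos_diff_trans:
  assumes "x \<in> carrier R" "y \<in> carrier R" "z \<in> carrier R" "val_pos (x \<ominus> y)" "val_pos (y \<ominus> z)"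
  shows "val_pos (x \<ominus> z)"
proof -
  have "x \<ominus> z = (x \<ominus> y) \<oplus> (y \<ominus> z)" using assms by algebra
  then show ?thesis using val_pos_add[of "x \<ominus> y" "y \<ominus> z"] assms by simp
qed

lemma val_pos_pow_imp_val_pos:
  assumes "y \<in> carrier R" "val_pos (y [^] (k::nat))" "k > 0"
  shows "val_pos y"
proof (cases "y = \<zero>")
  case False
  then have "0 < real k * v y"
    using assms val_pow[of y k] nonzero_pow[of y k] unfolding val_pos_def by simp
  then show ?thesis using assms(3) unfolding val_pos_def by (simp add: zero_less_mult_iff)
qed simp

lemma val_pos_pow_minus_one:
  assumes y: "y \<in> carrier R" "val_ge y 0" "val_pos (y \<ominus> \<one>)"
  shows "val_pos (y [^] (k::nat) \<ominus> \<one>)"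
proof (induct k)
  case (Suc k)
  have "y [^] k \<in> carrier R" using y by simp
  then have "y [^] Suc k \<ominus> \<one> = (y [^] k \<ominus> \<one>) \<otimes> y \<oplus> (y \<ominus> \<one>)"
    unfolding nat_pow_Suc using y(1) by algebra
  then show ?case using val_pos_mult[OF _ y(1) Suc y(2)] val_pos_add[OF _ _ _ y(3)] y(1) by simp
qed (simp add: minus_eq r_neg)

lemma val_ge_pow_diff:
  assumes x: "x \<in> carrier R" "val_ge x 0" and y: "y \<in> carrier R" "val_ge y 0"
    and xy: "val_ge (x \<ominus> y) M"
  shows "val_ge (x [^] (k::nat) \<ominus> y [^] k) M"
proof (induct k)
  case (Suc k)
  have "x [^] k \<in> carrier R" "y [^] k \<in> carrier R" using x y by simp_all
  then have "x [^] Suc k \<ominus> y [^] Suc k = (x \<ominus> y) \<otimes> x [^] k \<oplus> (x [^] k \<ominus> y [^] k) \<otimes> y"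
    unfolding nat_pow_Suc using x(1) y(1) by algebra
  moreover have "val_ge ((x \<ominus> y) \<otimes> x [^] k) M"
    using val_ge_mult[OF _ _ xy val_ge_pow[OF x, of k]] x y by simp
  moreover have "val_ge ((x [^] k \<ominus> y [^] k) \<otimes> y) M"
    using val_ge_mult[OF _ _ Suc y(2)] x y by simp
  ultimately show ?case using val_ge_add x y by simp
qed (use x y in \<open>simp add: minus_eq r_neg\<close>)

lemma vclose_iff_val_ge: "x \<in> carrier R \<Longrightarrow> y \<in> carrier R \<Longrightarrow> vclose R v M x y \<longleftrightarrow> val_ge (x \<ominus> y) M"
  unfolding vclose_def val_ge_def using r_right_minus_eq by auto

lemma vconverges_iff:
  "(\<And>n. f n \<in> carrier R) \<Longrightarrow> x \<in> carrier R \<Longrightarrow>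
   vconverges R v f x \<longleftrightarrow> (\<forall>M. \<exists>N. \<forall>n\<ge>N. val_ge (f n \<ominus> x) M)"
  by (simp add: vconverges_def vclose_iff_val_ge)

lemma vcauchy_iff:
  "(\<And>n. f n \<in> carrier R) \<Longrightarrow> vcauchy R v f \<longleftrightarrow> (\<forall>M. \<exists>N. \<forall>m\<ge>N. \<forall>n\<ge>N. val_ge (f m \<ominus> f n) M)"
  by (simp add: vcauchy_def vclose_iff_val_ge)

lemma vconverges_unique:
  assumes f: "\<And>n. f n \<in> carrier R" and x: "x \<in> carrier R" and y: "y \<in> carrier R"
    and "vconverges R v f x" "vconverges R v f y"
  shows "x = y"
proof (rule ccontr)
  assume ne: "x \<noteq> y"
  define M where "M = v (x \<ominus> y) + 1"
  obtain N1 N2 where "\<And>n. n \<ge> N1 \<Longrightarrow> val_ge (f n \<ominus> x) M" "\<And>n. n \<ge> N2 \<Longrightarrow> val_ge (f n \<ominus> y) M"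
    using assms vconverges_iff[of f x, OF f x] vconverges_iff[of f y, OF f y] by meson
  then have "val_ge (x \<ominus> f (max N1 N2)) M" "val_ge (f (max N1 N2) \<ominus> y) M"
    using val_ge_diff_commute f x y by auto
  then have "val_ge (x \<ominus> y) M" using val_ge_diff_trans f x y by blast
  moreover have "x \<ominus> y \<noteq> \<zero>" using ne x y r_right_minus_eq by simp
  ultimately show False unfolding val_ge_def M_def by simp
qed

lemma vconverges_imp_vcauchy:
  assumes f: "\<And>n. f n \<in> carrier R" and x: "x \<in> carrier R" and "vconverges R v f x"
  shows "vcauchy R v f"
  unfolding vcauchy_iff[of f, OF f]
proof
  fix M
  obtain N where N: "\<And>n. n \<ge> N \<Longrightarrow> val_ge (f n \<ominus> x) M"
    using assms vconverges_iff[of f x, OF f x] by blast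
  have "val_ge (f m \<ominus> f n) M" if "m \<ge> N" "n \<ge> N" for m n
    using N[OF that(1)] N[OF that(2)] val_ge_diff_commute val_ge_diff_trans f x by metis
  then show "\<exists>N. \<forall>m\<ge>N. \<forall>n\<ge>N. val_ge (f m \<ominus> f n) M" by blast
qed

lemma vconverges_add:
  assumes f: "\<And>n. f n \<in> carrier R" and g: "\<And>n. g n \<in> carrier R"
    and x: "x \<in> carrier R" and y: "y \<in> carrier R"
    and "vconverges R v f x" "vconverges R v g y"
  shows "vconverges R v (\<lambda>n. f n \<oplus> g n) (x \<oplus> y)"
  unfolding vconverges_iff[OF a_closed[OF f g] a_closed[OF x y]]
proof
  fix M
  obtain N1 N2 where N: "\<And>n. n \<ge> N1 \<Longrightarrow> val_ge (f n \<ominus> x) M" "\<And>n. n \<ge> N2 \<Longrightarrow> val_ge (g n \<ominus> y) M"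
    using assms vconverges_iff[of f x, OF f x] vconverges_iff[of g y, OF g y] by meson
  have "(f n \<oplus> g n) \<ominus> (x \<oplus> y) = (f n \<ominus> x) \<oplus> (g n \<ominus> y)" for n
    using f[of n] g[of n] x y by algebra
  then have "val_ge ((f n \<oplus> g n) \<ominus> (x \<oplus> y)) M" if "n \<ge> max N1 N2" for n
    using val_ge_add N that f g x y by simp
  then show "\<exists>N. \<forall>n\<ge>N. val_ge ((f n \<oplus> g n) \<ominus> (x \<oplus> y)) M" by blast
qed

lemma vconverges_mult_left:
  assumes f: "\<And>n. f n \<in> carrier R" and x: "x \<in> carrier R" and c: "c \<in> carrier R"
    and "vconverges R v f x"
  shows "vconverges R v (\<lambda>n. c \<otimes> f n) (c \<otimes> x)"
proof (cases "c = \<zero>")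
  case True
  then show ?thesis using f x by (simp add: vconverges_def vclose_def)
next
  case False
  show ?thesis unfolding vconverges_iff[OF m_closed[OF c f] m_closed[OF c x]]
  proof
    fix M
    obtain N where N: "\<And>n. n \<ge> N \<Longrightarrow> val_ge (f n \<ominus> x) (M - v c)"
      using assms vconverges_iff[of f x, OF f x] by blast
    have "c \<otimes> f n \<ominus> c \<otimes> x = (f n \<ominus> x) \<otimes> c" for n using f[of n] x c by algebra
    then have "val_ge (c \<otimes> f n \<ominus> c \<otimes> x) M" if "n \<ge> N" for n
      using val_ge_mult_nonzero[OF _ c False N[OF that]] f x by simp
    then show "\<exists>N. \<forall>n\<ge>N. val_ge (c \<otimes> f n \<ominus> c \<otimes> x) M" by blast
  qed
qed

lemma vconverges_Suc:
  assumes "\<And>n. f n \<in> carrier R" "x \<in> carrier R" "vconverges R v f x"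
  shows "vconverges R v (\<lambda>n. f (Suc n)) x"
  using assms unfolding vconverges_iff[of f x, OF assms(1,2)] vconverges_iff[of "\<lambda>n. f (Suc n)" x, OF assms(1,2)]
  by (meson le_SucI)

lemma vconverges_pow:
  assumes f: "\<And>n. f n \<in> carrier R" "\<And>n. val_ge (f n) 0" and x: "x \<in> carrier R" "val_ge x 0"
    and "vconverges R v f x"
  shows "vconverges R v (\<lambda>n. f n [^] (k::nat)) (x [^] k)"
  unfolding vconverges_iff[OF nat_pow_closed[OF f(1)] nat_pow_closed[OF x(1)]]
proof
  fix M
  obtain N where "\<And>n. n \<ge> N \<Longrightarrow> val_ge (f n \<ominus> x) M"
    using assms vconverges_iff[of f x, OF f(1) x(1)] by blast
  then show "\<exists>N. \<forall>n\<ge>N. val_ge (f n [^] k \<ominus> x [^] k) M" using val_ge_pow_diff[OF f(1,2) x] by blast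
qed

lemma val_diff_bounded_if_vcomplete:
  assumes E: "E \<subseteq> carrier R" "vcomplete R v E" and th: "th \<in> carrier R" "th \<notin> E"
  shows "\<exists>C. \<forall>y\<in>E. v (th \<ominus> y) \<le> C"
proof (rule ccontr)
  assume "\<not> (\<exists>C. \<forall>y\<in>E. v (th \<ominus> y) \<le> C)"
  then have "\<forall>j::nat. \<exists>y\<in>E. real j < v (th \<ominus> y)" by (meson not_le)
  then obtain f where f: "\<And>j. f j \<in> E" "\<And>j. real j < v (th \<ominus> f j)" by metis
  have fc: "\<And>j. f j \<in> carrier R" using f E by auto
  have lim: "vconverges R v f th"
    unfolding vconverges_iff[of f th, OF fc th(1)]
  proof
    fix M
    obtain N :: nat where N: "M \<le> real N" using real_nat_ceiling_ge by blast
    have "val_ge (f n \<ominus> th) M" if "n \<ge> N" for n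
    proof -
      have "M \<le> v (th \<ominus> f n)" using f(2)[of n] N that by linarith
      then show ?thesis using val_ge_diff_commute[OF fc th(1)] unfolding val_ge_def by blast
    qed
    then show "\<exists>N. \<forall>n\<ge>N. val_ge (f n \<ominus> th) M" by blast
  qed
  then have "vcauchy R v f" using vconverges_imp_vcauchy[of f th, OF fc th(1)] by blast
  then obtain y where "y \<in> E" "vconverges R v f y" using E(2) f(1) unfolding vcomplete_def by blast
  then show False using vconverges_unique[of f th, OF fc th(1) _ lim] E th by blast
qed

end

section \<open>Completeness of finite-dimensional subspaces\<close>

context valued_field
begin

lemma line_extension_coeff_val_ge:
  assumes K: "subfield K R" and E: "dimension n K E"
    and th: "th \<in> carrier R" "th \<notin> E" and C: "\<And>y. y \<in> E \<Longrightarrow> v (th \<ominus> y) \<le> C"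
    and k: "k \<in> K" and y: "y \<in> E" and ge: "val_ge (k \<otimes> th \<oplus> y) M"
  shows "val_ge k (M - C)"
proof (cases "k = \<zero>")
  case False
  note Ep = space_subgroup_props[OF K E]
  have kc: "k \<in> carrier R" using k subfieldE(3)[OF K] by auto
  have yc: "y \<in> carrier R" using y Ep(1) by auto
  note ik = inv_nonzero[OF kc False]
  define y' where "y' = \<ominus> (inv k \<otimes> y)"
  have y': "y' \<in> E" unfolding y'_def using Ep(4,5) subfield_m_inv(1)[OF K] k False y by auto
  have eq: "k \<otimes> th \<oplus> y = k \<otimes> (th \<ominus> y')"
  proof -
    have "k \<otimes> (th \<ominus> y') = k \<otimes> th \<oplus> (k \<otimes> inv k) \<otimes> y"
      unfolding y'_def using kc ik(1) th yc by algebra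
    then show ?thesis using ik yc by simp
  qed
  have nz: "th \<ominus> y' \<noteq> \<zero>" using th y' Ep(1) r_right_minus_eq by blast
  then have "v (k \<otimes> th \<oplus> y) = v k + v (th \<ominus> y')"
    using eq val_mult[OF kc _ False nz] th y' Ep(1) by auto
  moreover have "k \<otimes> th \<oplus> y \<noteq> \<zero>" using eq nonzero_mult[OF kc _ False nz] th y' Ep(1) by auto
  ultimately show ?thesis using ge C[OF y'] unfolding val_ge_def by simp
qed simp

lemma line_extension_coeffs_vcauchy:
  assumes K: "subfield K R" and E: "dimension n K E" "vcomplete R v E"
    and th: "th \<in> carrier R" "th \<notin> E" and kf: "\<And>j. kf j \<in> K" and yf: "\<And>j. yf j \<in> E"
    and cau: "vcauchy R v (\<lambda>j. kf j \<otimes> th \<oplus> yf j)"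
  shows "vcauchy R v kf" "vcauchy R v yf"
proof -
  note Ep = space_subgroup_props[OF K E(1)]
  have kfc: "\<And>j. kf j \<in> carrier R" and yfc: "\<And>j. yf j \<in> carrier R"
    using kf yf subfieldE(3)[OF K] Ep(1) by auto
  have Ksub: "y \<ominus> z \<in> K" if "y \<in> K" "z \<in> K" for y z
    using K that by (simp add: minus_eq subringE(5,6) subfieldE(1))
  have Esub: "y \<ominus> z \<in> E" if "y \<in> E" "z \<in> E" for y z
    using Ep(3,4) that by (simp add: minus_eq)
  define f where "f j = kf j \<otimes> th \<oplus> yf j" for j
  have fc: "\<And>j. f j \<in> carrier R" unfolding f_def using kfc yfc th by simp
  have fcau: "\<forall>M. \<exists>N. \<forall>i\<ge>N. \<forall>j\<ge>N. val_ge (f i \<ominus> f j) M"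
    using cau vcauchy_iff[of f, OF fc] unfolding f_def by simp
  have dif: "f i \<ominus> f j = (kf i \<ominus> kf j) \<otimes> th \<oplus> (yf i \<ominus> yf j)" for i j
    unfolding f_def using kfc[of i] kfc[of j] yfc[of i] yfc[of j] th by algebra
  obtain C where C: "\<And>y. y \<in> E \<Longrightarrow> v (th \<ominus> y) \<le> C"
    using val_diff_bounded_if_vcomplete[OF Ep(1) E(2) th] by blast
  have kcau: "\<forall>M. \<exists>N. \<forall>i\<ge>N. \<forall>j\<ge>N. val_ge (kf i \<ominus> kf j) M"
  proof
    fix M
    obtain N where "\<forall>i\<ge>N. \<forall>j\<ge>N. val_ge (f i \<ominus> f j) (M + C)" using fcau by blast
    then have "\<forall>i\<ge>N. \<forall>j\<ge>N. val_ge (kf i \<ominus> kf j) M"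
      using line_extension_coeff_val_ge[OF K E(1) th C Ksub[OF kf kf] Esub[OF yf yf]]
      unfolding dif by fastforce
    then show "\<exists>N. \<forall>i\<ge>N. \<forall>j\<ge>N. val_ge (kf i \<ominus> kf j) M" by blast
  qed
  then show "vcauchy R v kf" using vcauchy_iff[of kf, OF kfc] by blast
  have "\<forall>M. \<exists>N. \<forall>i\<ge>N. \<forall>j\<ge>N. val_ge (yf i \<ominus> yf j) M"
  proof
    fix M
    obtain N1 N2 where N: "\<forall>i\<ge>N1. \<forall>j\<ge>N1. val_ge (f i \<ominus> f j) M"
      "\<forall>i\<ge>N2. \<forall>j\<ge>N2. val_ge (kf i \<ominus> kf j) (M - v th)"
      using fcau kcau by meson
    have "val_ge (yf i \<ominus> yf j) M" if "i \<ge> max N1 N2" "j \<ge> max N1 N2" for i j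
    proof -
      have "th \<noteq> \<zero>" using th Ep(2) by auto
      then have "val_ge ((kf i \<ominus> kf j) \<otimes> th) M"
        using val_ge_mult_nonzero[OF _ th(1), of "kf i \<ominus> kf j" "M - v th"] N(2) that kfc by simp
      moreover have "yf i \<ominus> yf j = (f i \<ominus> f j) \<ominus> (kf i \<ominus> kf j) \<otimes> th"
        using dif[of i j] fc[of i] fc[of j] kfc[of i] kfc[of j] yfc[of i] yfc[of j] th by algebra
      ultimately show ?thesis using val_ge_diff N(1) that fc kfc th by simp
    qed
    then show "\<exists>N. \<forall>i\<ge>N. \<forall>j\<ge>N. val_ge (yf i \<ominus> yf j) M" by blast
  qed
  then show "vcauchy R v yf" using vcauchy_iff[of yf, OF yfc] by blast
qed

lemma vcomplete_line_extension:
  assumes K: "subfield K R" "vcomplete R v K" and E: "dimension n K E" "vcomplete R v E"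
    and th: "th \<in> carrier R" "th \<notin> E"
  shows "vcomplete R v (line_extension K th E)"
  unfolding vcomplete_def
proof (intro allI impI)
  have Kc: "K \<subseteq> carrier R" and Ec: "E \<subseteq> carrier R"
    using subfieldE(3)[OF K(1)] space_subgroup_props(1)[OF K(1) E(1)] .
  fix f assume f: "(\<forall>j. f j \<in> line_extension K th E) \<and> vcauchy R v f"
  then have "\<forall>j. \<exists>k\<in>K. \<exists>y\<in>E. f j = k \<otimes> th \<oplus> y" using line_extension_mem_iff by blast
  then obtain kf yf where kf: "\<And>j. kf j \<in> K" and yf: "\<And>j. yf j \<in> E"
    and fe: "f = (\<lambda>j. kf j \<otimes> th \<oplus> yf j)" by metis
  then have "vcauchy R v kf" "vcauchy R v yf"
    using line_extension_coeffs_vcauchy[OF K(1) E th kf yf] f by auto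
  then obtain k y where k: "k \<in> K" "vconverges R v kf k" and y: "y \<in> E" "vconverges R v yf y"
    using K(2) E(2) kf yf unfolding vcomplete_def by meson
  have "vconverges R v (\<lambda>j. th \<otimes> kf j \<oplus> yf j) (th \<otimes> k \<oplus> y)"
    using vconverges_add[OF _ _ _ _ vconverges_mult_left[of kf k th, OF _ _ th(1) k(2)] y(2)]
      kf yf th k(1) y(1) Kc Ec by auto
  moreover have "(\<lambda>j. th \<otimes> kf j \<oplus> yf j) = f" using fe kf th Kc by (auto simp: m_comm subsetD)
  moreover have "th \<otimes> k \<oplus> y \<in> line_extension K th E"
    using line_extension_mem_iff k(1) y(1) th Kc by (metis m_comm subsetD)
  ultimately show "\<exists>x\<in>line_extension K th E. vconverges R v f x" by auto
qed

lemma vcomplete_dimension: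
  assumes K: "subfield K R" "vcomplete R v K" and E: "dimension n K E"
  shows "vcomplete R v E"
proof -
  have "K' = K \<Longrightarrow> vcomplete R v E'" if "dimension m K' E'" for m K' E'
    using that
  proof (induction rule: dimension.induct)
    case (zero_dim K')
    show ?case by (simp add: vcomplete_def vconverges_def vclose_def)
  next
    case (Suc_dim th E n K')
    then show ?case using vcomplete_line_extension[OF K] by blast
  qed
  then show ?thesis using E by blast
qed

end

section \<open>The value group of a finite extension\<close>

lemma int_mult_mem_if_add_uminus_closed:
  fixes G :: "real set"
  assumes add: "\<And>g h. g \<in> G \<Longrightarrow> h \<in> G \<Longrightarrow> g + h \<in> G" and uminus: "\<And>g. g \<in> G \<Longrightarrow> - g \<in> G"
    and zero: "0 \<in> G" and g: "g \<in> G"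
  shows "real_of_int j * g \<in> G"
proof -
  have nat_mult: "real n * g \<in> G" for n :: nat
  proof (induct n)
    case (Suc n)
    then show ?case using add[OF Suc g] by (simp add: algebra_simps)
  qed (use zero in simp)
  show ?thesis
    using nat_mult[of "nat j"] uminus[OF nat_mult[of "nat (- j)"]] by (cases "j \<ge> 0") auto
qed

lemma discrete_subgroup_of_reals:
  fixes G :: "real set" and D :: nat
  assumes add: "\<And>g h. g \<in> G \<Longrightarrow> h \<in> G \<Longrightarrow> g + h \<in> G" and uminus: "\<And>g. g \<in> G \<Longrightarrow> - g \<in> G"
    and ints: "\<And>k. real_of_int k \<in> G" and D: "D > 0" "\<And>g. g \<in> G \<Longrightarrow> real D * g \<in> \<int>"
  shows "\<exists>e::nat. e > 0 \<and> G = {real_of_int k / real e | k. True}"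
proof -
  have "0 \<in> G" using ints[of 0] by simp
  then have int_mult: "real_of_int j * g \<in> G" if "g \<in> G" for j g
    using int_mult_mem_if_add_uminus_closed[of G g j] add uminus that by blast
  define P where "P = {g \<in> G. 0 < g \<and> g \<le> 1}"
  have "P \<subseteq> (\<lambda>j. real_of_int j / real D) ` {1..int D}"
  proof
    fix g assume g: "g \<in> P"
    then obtain j where j: "real D * g = real_of_int j" using D(2) unfolding P_def by (auto elim: Ints_cases)
    moreover have "0 < real D * g" "real D * g \<le> real D" using g D(1) unfolding P_def by auto
    ultimately show "g \<in> (\<lambda>j. real_of_int j / real D) ` {1..int D}"
      using D(1) by (intro image_eqI[of _ _ j]) (auto simp: field_simps)
  qed
  then have "finite P" by (rule finite_subset) simp
  moreover have "1 \<in> P" unfolding P_def using ints[of 1] by simp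
  ultimately have g0: "Min P \<in> P" "\<And>g. g \<in> P \<Longrightarrow> Min P \<le> g" by (auto intro: Min_in)
  define g0 where "g0 = Min P"
  have g0G: "g0 > 0" "g0 \<in> G" using g0(1) unfolding g0_def P_def by auto
  have multiple: "\<exists>k::int. g = real_of_int k * g0" if g: "g \<in> G" for g
  proof -
    define k where "k = \<lfloor>g / g0\<rfloor>"
    define r where "r = g - real_of_int k * g0"
    have "r \<in> G" unfolding r_def using add[OF g uminus[OF int_mult[OF g0G(2), of k]]] by simp
    moreover have "0 \<le> r" "r < g0"
      using floor_divide_lower[OF g0G(1), of g] floor_divide_upper[OF g0G(1), of g]
      unfolding r_def k_def by (auto simp: algebra_simps)
    ultimately have "r = 0" using g0(2) g0(1) unfolding g0_def P_def by fastforce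
    then show ?thesis unfolding r_def by auto
  qed
  obtain k0 where k0: "1 = real_of_int k0 * g0" using multiple[OF ints[of 1]] by auto
  then have "k0 > 0" using g0G(1) by (metis of_int_0_less_iff zero_less_mult_pos2 zero_less_one)
  then have e: "nat k0 > 0" "g0 = 1 / real (nat k0)" using k0 by (auto simp: field_simps)
  have "G = {real_of_int k / real (nat k0) | k. True}"
  proof
    show "G \<subseteq> {real_of_int k / real (nat k0) | k. True}" using multiple e(2) by fastforce
    show "{real_of_int k / real (nat k0) | k. True} \<subseteq> G" using int_mult[OF g0G(2)] e(2) by auto
  qed
  then show ?thesis using e(1) by blast
qed

lemma int_fractions_inj:
  fixes e e' :: nat
  assumes "e > 0" "e' > 0" "{real_of_int k / real e | k. True} = {real_of_int k / real e' | k. True}"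
  shows "e = e'"
proof -
  have dvd: "int b dvd int a"
    if "a > 0" "b > 0" "{real_of_int k / real a | k. True} = {real_of_int k / real b | k. True}" for a b :: nat
  proof -
    have "1 / real b \<in> {real_of_int k / real a | k. True}" using that(3) by (auto intro: exI[of _ 1])
    then obtain k where "1 / real b = real_of_int k / real a" by blast
    then have "int a = k * int b" using that(1,2) by (simp add: field_simps) (metis of_int_eq_iff of_int_mult of_int_of_nat_eq)
    then show ?thesis by (metis dvd_triv_right)
  qed
  show ?thesis using dvd[OF assms] dvd[OF assms(2,1) assms(3)[symmetric]] by (simp add: dvd_antisym)
qed

lemma ram_index_eqI:
  assumes "e > 0" "v ` (L - {\<zero>\<^bsub>R\<^esub>}) = {real_of_int k / real e | k. True}"
  shows "ram_index R v L = e"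
  unfolding ram_index_def using assms int_fractions_inj by (intro the_equality) auto

lemma (in field) subfield_closed:
  assumes "subfield L R"
  shows "L \<subseteq> carrier R" "\<zero> \<in> L" "\<one> \<in> L"
    and "\<And>x y. x \<in> L \<Longrightarrow> y \<in> L \<Longrightarrow> x \<otimes> y \<in> L" "\<And>x y. x \<in> L \<Longrightarrow> y \<in> L \<Longrightarrow> x \<oplus> y \<in> L"
    and "\<And>x. x \<in> L \<Longrightarrow> \<ominus> x \<in> L" "\<And>x y. x \<in> L \<Longrightarrow> y \<in> L \<Longrightarrow> x \<ominus> y \<in> L"
    and "\<And>x. x \<in> L \<Longrightarrow> x \<noteq> \<zero> \<Longrightarrow> inv x \<in> L" "\<And>x n. x \<in> L \<Longrightarrow> x [^] (n::nat) \<in> L"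
proof -
  note sr = subringE[OF subfieldE(1)[OF assms]]
  show "L \<subseteq> carrier R" "\<zero> \<in> L" "\<one> \<in> L" "\<And>x y. x \<in> L \<Longrightarrow> y \<in> L \<Longrightarrow> x \<otimes> y \<in> L"
    "\<And>x y. x \<in> L \<Longrightarrow> y \<in> L \<Longrightarrow> x \<oplus> y \<in> L" "\<And>x. x \<in> L \<Longrightarrow> \<ominus> x \<in> L"
    "\<And>x y. x \<in> L \<Longrightarrow> y \<in> L \<Longrightarrow> x \<ominus> y \<in> L" using sr by (auto simp: minus_eq)
  show "\<And>x. x \<in> L \<Longrightarrow> x \<noteq> \<zero> \<Longrightarrow> inv x \<in> L" using subfield_m_inv(1)[OF assms] by blast
  show "\<And>x n. x \<in> L \<Longrightarrow> x [^] (n::nat) \<in> L"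
  proof -
    fix x n assume "x \<in> L"
    then show "x [^] (n::nat) \<in> L" by (induct n) (use sr in auto)
  qed
qed

locale CP_setting =
  fixes R :: "('a, 'b) ring_scheme" (structure) and v :: "'a \<Rightarrow> real" and p :: nat and K :: "'a set"
  assumes CP: "CP_setup R v p K"

sublocale CP_setting \<subseteq> valued_field R v
  using CP unfolding CP_setup_def by (simp add: valued_field.intro valued_field_axioms.intro)

sublocale CP_setting \<subseteq> char_p_cring R p
  using CP unfolding CP_setup_def by (simp add: char_p_cring.intro char_p_cring_axioms.intro field.axioms(1) domain.axioms(1))

context CP_setting
begin

lemma subfield_K: "subfield K R"
  and vcomplete_K: "vcomplete R v K"
  and val_K: "v ` (K - {\<zero>}) = range real_of_int"
  and residue_field_K: "finite_residue_field R v K"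
  and alg_closed: "algebraically_closed R"
  using CP unfolding CP_setup_def by auto

lemmas K_closed = subfield_closed[OF subfield_K]

lemma val_K_Ints: "k \<in> K \<Longrightarrow> k \<noteq> \<zero> \<Longrightarrow> v k \<in> \<int>"
  using val_K by (metis DiffI Ints_of_int image_eqI rangeE singletonD)

lemma combine_val_congruent:
  assumes "set xs \<subseteq> carrier R - {\<zero>}" "sorted_wrt (\<lambda>x y. v x - v y \<notin> \<int>) xs"
    and "set ks \<subseteq> K" "length ks = length xs"
  shows "combine ks xs = \<zero> \<or> (\<exists>y\<in>set xs. v (combine ks xs) - v y \<in> \<int>)"
  using assms
proof (induction xs arbitrary: ks)
  case (Cons x xs)
  obtain k ks' where ks: "ks = k # ks'" using Cons.prems(4) by (cases ks) auto
  have x: "x \<in> carrier R" "x \<noteq> \<zero>" and k: "k \<in> K" "k \<in> carrier R"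
    using Cons.prems(1,3) ks K_closed(1) by auto
  define c where "c = combine ks' xs"
  have cc: "c \<in> carrier R" unfolding c_def using Cons.prems(1,3) ks K_closed(1) by auto
  have IH: "c = \<zero> \<or> (\<exists>y\<in>set xs. v c - v y \<in> \<int>)"
    unfolding c_def using Cons.IH[of ks'] Cons.prems ks by auto
  have eq: "combine ks (x # xs) = k \<otimes> x \<oplus> c" unfolding c_def ks by simp
  show ?case
  proof (cases "k = \<zero>")
    case True
    then show ?thesis using eq x cc IH by auto
  next
    case False
    have kx: "k \<otimes> x \<in> carrier R" "k \<otimes> x \<noteq> \<zero>" using k x False nonzero_mult by auto
    have vkx: "v (k \<otimes> x) - v x \<in> \<int>" using val_mult[OF k(2) x(1) False x(2)] val_K_Ints[OF k(1) False] by simp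
    show ?thesis
    proof (cases "c = \<zero>")
      case True
      then show ?thesis using eq kx vkx by auto
    next
      case False
      then obtain y where y: "y \<in> set xs" "v c - v y \<in> \<int>" using IH by auto
      have "v (k \<otimes> x) \<noteq> v c"
      proof
        assume "v (k \<otimes> x) = v c"
        then have "v x - v y = (v c - v y) - (v (k \<otimes> x) - v x)" by simp
        then have "v x - v y \<in> \<int>" using y(2) vkx by (metis Ints_diff)
        then show False using Cons.prems(2) y(1) by simp
      qed
      then consider "v (k \<otimes> x) < v c" | "v c < v (k \<otimes> x)" by linarith
      then show ?thesis
      proof cases
        case 1
        then show ?thesis using val_add_eq_left[OF kx(1) cc kx(2) False] eq vkx by auto
      next
        case 2
        then show ?thesis using val_add_eq_left[OF cc kx(1) False kx(2)] eq y cc kx(1) by (auto simp: a_comm)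
      qed
    qed
  qed
qed simp

lemma independent_if_vals_incongruent:
  assumes "set xs \<subseteq> carrier R - {\<zero>}" "sorted_wrt (\<lambda>x y. v x - v y \<notin> \<int>) xs"
  shows "independent K xs"
  using assms
proof (induction xs)
  case (Cons x xs)
  have x: "x \<in> carrier R" "x \<noteq> \<zero>" and xs: "set xs \<subseteq> carrier R" using Cons.prems(1) by auto
  have "x \<notin> Span K xs"
  proof
    assume "x \<in> Span K xs"
    then obtain ks where "set ks \<subseteq> K" "length ks = length xs" "x = combine ks xs"
      using Span_mem_iff_length_version[OF subfield_K xs] by blast
    then obtain y where "y \<in> set xs" "v x - v y \<in> \<int>"
      using combine_val_congruent[of xs ks] Cons.prems x by auto
    then show False using Cons.prems(2) by simp
  qed
  then show ?case using Cons li_Cons x by simp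
qed simp

end

definition (in valued_field) value_group :: "'a set \<Rightarrow> real set" where
  "value_group L = v ` (L - {\<zero>})"

context CP_setting
begin

context
  fixes L assumes L: "finite_ext R K L"
begin

lemma subfield_L: "subfield L R" and K_subset_L: "K \<subseteq> L" and dimension_L: "\<exists>d. dimension d K L"
  using L unfolding finite_ext_def finite_dimension_def by auto

lemmas L_closed = subfield_closed[OF subfield_L]

lemma vcomplete_L: "vcomplete R v L"
  using dimension_L vcomplete_dimension[OF subfield_K vcomplete_K] by blast

lemma value_group_add:
  assumes "g \<in> value_group L" "h \<in> value_group L"
  shows "g + h \<in> value_group L"
proof -
  obtain x y where xy: "x \<in> L" "x \<noteq> \<zero>" "y \<in> L" "y \<noteq> \<zero>" "g = v x" "h = v y"
    using assms unfolding value_group_def by auto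
  moreover have "x \<in> carrier R" "y \<in> carrier R" using xy L_closed(1) by auto
  ultimately have "x \<otimes> y \<in> L - {\<zero>}" "g + h = v (x \<otimes> y)"
    using nonzero_mult L_closed(4) val_mult by auto
  then show ?thesis unfolding value_group_def by (rule rev_image_eqI)
qed

lemma value_group_uminus:
  assumes "g \<in> value_group L"
  shows "- g \<in> value_group L"
proof -
  obtain x where x: "x \<in> L" "x \<noteq> \<zero>" "g = v x" using assms unfolding value_group_def by auto
  then have "inv x \<in> L - {\<zero>}" "- g = v (inv x)"
    using L_closed(1,8) inv_nonzero val_inv by auto
  then show ?thesis unfolding value_group_def by (rule rev_image_eqI)
qed

lemma of_int_in_value_group: "real_of_int j \<in> value_group L"
proof -
  obtain x where "x \<in> K - {\<zero>}" "real_of_int j = v x" using val_K by (metis rangeI imageE)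
  then show ?thesis unfolding value_group_def using K_subset_L by (intro rev_image_eqI) auto
qed

lemma value_group_rational:
  assumes d: "dimension d K L" and g: "g \<in> value_group L"
  shows "\<exists>r. 1 \<le> r \<and> r \<le> d \<and> real r * g \<in> \<int>"
proof (rule ccontr)
  assume nr: "\<not> (\<exists>r. 1 \<le> r \<and> r \<le> d \<and> real r * g \<in> \<int>)"
  obtain y where y: "y \<in> L" "y \<noteq> \<zero>" "v y = g" using g unfolding value_group_def by auto
  have yc: "y \<in> carrier R" using y L_closed(1) by auto
  define xs where "xs = map (\<lambda>j. y [^] j) [0..<Suc d]"
  have "v (xs ! i) - v (xs ! j) \<notin> \<int>" if ij: "i < j" "j < length xs" for i j
  proof -
    have "v (xs ! i) - v (xs ! j) = - (real (j - i) * g)"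
      using ij val_pow[OF yc y(2)] y(3) unfolding xs_def
      by (auto simp del: upt_Suc simp: algebra_simps of_nat_diff)
    moreover have "1 \<le> j - i" "j - i \<le> d" using ij unfolding xs_def by auto
    then have "real (j - i) * g \<notin> \<int>" using nr by blast
    ultimately show ?thesis using Ints_minus by fastforce
  qed
  then have "sorted_wrt (\<lambda>x y. v x - v y \<notin> \<int>) xs" unfolding sorted_wrt_iff_nth_less by blast
  moreover have "set xs \<subseteq> carrier R - {\<zero>}" unfolding xs_def using nonzero_pow[OF yc y(2)] yc by auto
  ultimately have "independent K xs" using independent_if_vals_incongruent by blast
  moreover have "set xs \<subseteq> L" unfolding xs_def using L_closed(9) y by auto
  ultimately have "length xs \<le> d" using independent_length_le_dimension[OF subfield_K d] by blast
  then show False unfolding xs_def by simp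
qed

lemma ram_index_finite_ext:
  "ram_index R v L > 0 \<and> value_group L = {real_of_int k / real (ram_index R v L) | k. True}"
proof -
  obtain d where d: "dimension d K L" using dimension_L by blast
  have "real (fact d) * g \<in> \<int>" if g: "g \<in> value_group L" for g
  proof -
    obtain r where r: "1 \<le> r" "r \<le> d" "real r * g \<in> \<int>" using value_group_rational[OF d g] by blast
    obtain t where "fact d = r * t" using dvd_fact[OF r(1,2)] by blast
    then show ?thesis using r(3) by (metis Ints_mult Ints_of_nat mult.assoc mult.commute of_nat_mult)
  qed
  then obtain e :: nat where "e > 0" "value_group L = {real_of_int k / real e | k. True}"
    using discrete_subgroup_of_reals[of "value_group L" "fact d"] value_group_add value_group_uminus
      of_int_in_value_group by (auto simp: fact_gt_zero)
  then show ?thesis using ram_index_eqI[of e v L R] unfolding value_group_def by simp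
qed

end

end

section \<open>The residue field of a finite extension\<close>

context valued_field
begin

lemma combine_uminus_mult:
  "set ks \<subseteq> carrier R \<Longrightarrow> set us \<subseteq> carrier R \<Longrightarrow> a \<in> carrier R \<Longrightarrow>
   combine (map (\<lambda>k. \<ominus> (a \<otimes> k)) ks) us = \<ominus> (a \<otimes> combine ks us)"
proof (induct ks us rule: combine.induct)
  case (1 k Ks u Us)
  then have c: "k \<in> carrier R" "u \<in> carrier R" "combine Ks Us \<in> carrier R" "a \<in> carrier R"
    and IH: "combine (map (\<lambda>k. \<ominus> (a \<otimes> k)) Ks) Us = \<ominus> (a \<otimes> combine Ks Us)" by auto
  show ?case using c IH by simp algebra
qed (auto elim: combine.elims)

lemma val_pos_combine_diff:
  "set ks \<subseteq> carrier R \<Longrightarrow> set us \<subseteq> carrier R \<Longrightarrow> (\<forall>u\<in>set us. val_ge u 0) \<Longrightarrow>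
   (\<forall>k\<in>set ks. f k \<in> carrier R \<and> val_pos (k \<ominus> f k)) \<Longrightarrow>
   val_pos (combine ks us \<ominus> combine (map f ks) us)"
proof (induct ks us rule: combine.induct)
  case (1 k Ks u Us)
  then have "set (map f Ks) \<subseteq> carrier R" by auto
  then have c: "k \<in> carrier R" "u \<in> carrier R" "f k \<in> carrier R"
    "combine Ks Us \<in> carrier R" "combine (map f Ks) Us \<in> carrier R" using 1 by auto
  then have "combine (k # Ks) (u # Us) \<ominus> combine (map f (k # Ks)) (u # Us)
     = (k \<ominus> f k) \<otimes> u \<oplus> (combine Ks Us \<ominus> combine (map f Ks) Us)"
    by simp algebra
  moreover have "val_pos ((k \<ominus> f k) \<otimes> u)" using val_pos_mult[of "k \<ominus> f k" u] c 1 by simp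
  ultimately show ?case using val_pos_add 1 c by simp
qed (auto simp: minus_eq r_neg elim: combine.elims)

end

context CP_setting
begin

definition residue_reps :: "'a set" where
  "residue_reps = (SOME F. finite F \<and> F \<subseteq> K \<and> (\<forall>s\<in>F. val_ge s 0) \<and>
     (\<forall>x\<in>K. val_ge x 0 \<longrightarrow> (\<exists>s\<in>F. val_pos (x \<ominus> s))))"

lemma residue_reps:
  "finite residue_reps" "residue_reps \<subseteq> K" "\<And>s. s \<in> residue_reps \<Longrightarrow> val_ge s 0"
  "\<And>x. x \<in> K \<Longrightarrow> val_ge x 0 \<Longrightarrow> \<exists>s\<in>residue_reps. val_pos (x \<ominus> s)"
proof -
  obtain F where F: "finite F" "F \<subseteq> K"
    "\<And>x. x \<in> K \<Longrightarrow> (x = \<zero> \<or> v x \<ge> 0) \<Longrightarrow> (\<exists>s \<in> F. x = s \<or> v (x \<ominus> s) > 0)"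
    using residue_field_K unfolding finite_residue_field_def by blast
  define F' where "F' = {s \<in> F. val_ge s 0}"
  have "finite F' \<and> F' \<subseteq> K \<and> (\<forall>s\<in>F'. val_ge s 0) \<and> (\<forall>x\<in>K. val_ge x 0 \<longrightarrow> (\<exists>s\<in>F'. val_pos (x \<ominus> s)))"
  proof (intro conjI ballI impI)
    fix x assume x: "x \<in> K" "val_ge x 0"
    then obtain s where s: "s \<in> F" "x = s \<or> v (x \<ominus> s) > 0" using F(3)[of x] unfolding val_ge_def by auto
    have xc: "x \<in> carrier R" "s \<in> carrier R" using x s F(2) K_closed(1) by auto
    have sm: "val_pos (x \<ominus> s)" using s xc unfolding val_pos_def by (auto simp: r_right_minus_eq)
    have "s = x \<ominus> (x \<ominus> s)" using xc by algebra
    moreover have "val_ge (x \<ominus> s) 0" using sm unfolding val_pos_def val_ge_def by auto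
    ultimately have "val_ge s 0" using val_ge_diff[of x "x \<ominus> s" 0] x xc by simp
    then show "\<exists>s\<in>F'. val_pos (x \<ominus> s)" using s(1) sm unfolding F'_def by auto
  qed (use F in \<open>auto simp: F'_def\<close>)
  then have "finite residue_reps \<and> residue_reps \<subseteq> K \<and> (\<forall>s\<in>residue_reps. val_ge s 0) \<and>
    (\<forall>x\<in>K. val_ge x 0 \<longrightarrow> (\<exists>s\<in>residue_reps. val_pos (x \<ominus> s)))"
    unfolding residue_reps_def by (rule someI)
  then show "finite residue_reps" "residue_reps \<subseteq> K" "\<And>s. s \<in> residue_reps \<Longrightarrow> val_ge s 0"
    "\<And>x. x \<in> K \<Longrightarrow> val_ge x 0 \<Longrightarrow> \<exists>s\<in>residue_reps. val_pos (x \<ominus> s)" by auto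
qed

context
  fixes L assumes L: "finite_ext R K L"
begin

text \<open>Integral elements of \<open>L\<close> whose residues are linearly independent over the residue field of \<open>K\<close>.\<close>

definition res_independent :: "'a list \<Rightarrow> bool" where
  "res_independent us \<longleftrightarrow> set us \<subseteq> L \<and> (\<forall>u\<in>set us. val_ge u 0) \<and>
     (\<forall>ks. set ks \<subseteq> K \<and> length ks = length us \<and> (\<forall>k\<in>set ks. val_ge k 0) \<and> val_pos (combine ks us)
        \<longrightarrow> (\<forall>k\<in>set ks. val_pos k))"

lemma normalize_coeffs:
  assumes ks: "set ks \<subseteq> K" "k1 \<in> set ks" "k1 \<noteq> \<zero>"
  shows "\<exists>c\<in>K. c \<noteq> \<zero> \<and> (\<forall>k\<in>set ks. val_ge (c \<otimes> k) 0) \<and> \<one> \<in> (\<otimes>) c ` set ks"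
proof -
  define NZ where "NZ = {k \<in> set ks. k \<noteq> \<zero>}"
  have "finite NZ" "NZ \<noteq> {}" using ks unfolding NZ_def by auto
  then have "Min (v ` NZ) \<in> v ` NZ" by simp
  then obtain k0 where k0: "k0 \<in> NZ" "v k0 = Min (v ` NZ)" by auto
  have k0_min: "v k0 \<le> v k" if "k \<in> NZ" for k using k0(2) \<open>finite NZ\<close> that by simp
  have k0c: "k0 \<in> carrier R" "k0 \<in> K" "k0 \<noteq> \<zero>" using k0(1) ks K_closed(1) unfolding NZ_def by auto
  note ik = inv_nonzero[OF k0c(1,3)]
  have "val_ge (inv k0 \<otimes> k) 0" if k: "k \<in> set ks" for k
  proof (cases "k = \<zero>")
    case False
    then have "v (inv k0 \<otimes> k) = v k - v k0"
      using k ik ks K_closed(1) val_mult[of "inv k0" k] val_inv[OF k0c(1,3)] by auto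
    then show ?thesis using k0_min[of k] k False unfolding NZ_def val_ge_def by simp
  qed (use ik in simp)
  moreover have "inv k0 \<otimes> k0 \<in> (\<otimes>) (inv k0) ` set ks" using k0(1) unfolding NZ_def by blast
  then have "\<one> \<in> (\<otimes>) (inv k0) ` set ks" using ik(3) by simp
  ultimately show ?thesis using K_closed(8) k0c ik(2) by blast
qed

lemma res_independent_imp_independent:
  assumes "res_independent us"
  shows "independent K us"
proof (rule ccontr)
  assume dep: "\<not> independent K us"
  have usc: "set us \<subseteq> carrier R" using assms L_closed(1)[OF L] unfolding res_independent_def by auto
  obtain ks where ks: "length ks = length us" "combine ks us = \<zero>" "set ks \<subseteq> K" "set ks \<noteq> {\<zero>}"
    using dependent_imp_non_trivial_combine[OF subfield_K usc dep] by blast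
  have "ks \<noteq> []" using ks(1) dep by auto
  then have "\<not> set ks \<subseteq> {\<zero>}" using ks(4) by (simp add: subset_singleton_iff)
  then obtain k1 where "k1 \<in> set ks" "k1 \<noteq> \<zero>" by blast
  then obtain c where c: "c \<in> K" "c \<noteq> \<zero>" "\<forall>k\<in>set ks. val_ge (c \<otimes> k) 0" "\<one> \<in> (\<otimes>) c ` set ks"
    using normalize_coeffs ks(3) by blast
  define ks' where "ks' = map ((\<otimes>) c) ks"
  have ksc: "set ks \<subseteq> carrier R" using ks(3) K_closed(1) by auto
  have "combine ks' us = \<zero>"
    unfolding ks'_def using combine_r_distr[OF ksc usc, of c] c(1) K_closed(1) ks(2) by auto
  moreover have "set ks' \<subseteq> K" "length ks' = length us" "\<forall>k\<in>set ks'. val_ge k 0"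
    unfolding ks'_def using ks(1,3) c K_closed(4) by auto
  moreover have "\<And>ks. set ks \<subseteq> K \<Longrightarrow> length ks = length us \<Longrightarrow> \<forall>k\<in>set ks. val_ge k 0 \<Longrightarrow>
      val_pos (combine ks us) \<Longrightarrow> \<forall>k\<in>set ks. val_pos k"
    using assms unfolding res_independent_def by blast
  ultimately have "\<forall>k\<in>set ks'. val_pos k" by simp
  then show False using c(4) val_one unfolding ks'_def val_pos_def by auto
qed

lemma res_independent_length:
  assumes "res_independent us" "dimension d K L"
  shows "length us \<le> d"
  using independent_length_le_dimension[OF subfield_K assms(2) res_independent_imp_independent[OF assms(1)]]
    assms(1) unfolding res_independent_def by auto

definition res_basis :: "'a list" where
  "res_basis = (SOME us. res_independent us \<and> (\<forall>ws. res_independent ws \<longrightarrow> length ws \<le> length us))"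

lemma res_basis: "res_independent res_basis" "\<And>ws. res_independent ws \<Longrightarrow> length ws \<le> length res_basis"
proof -
  obtain d where d: "dimension d K L" using dimension_L[OF L] by blast
  define S where "S = {length us | us. res_independent us}"
  have "finite S" using res_independent_length[OF _ d] by (intro finite_subset[of S "{..d}"]) (auto simp: S_def)
  moreover have "0 \<in> S" unfolding S_def res_independent_def by force
  ultimately have "Max S \<in> S" "\<And>n. n \<in> S \<Longrightarrow> n \<le> Max S" by (auto intro: Max_in)
  then have "\<exists>us. res_independent us \<and> (\<forall>ws. res_independent ws \<longrightarrow> length ws \<le> length us)"
    unfolding S_def by (smt (verit) mem_Collect_eq)
  then have "res_independent res_basis \<and> (\<forall>ws. res_independent ws \<longrightarrow> length ws \<le> length res_basis)"
    unfolding res_basis_def by (rule someI_ex)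
  then show "res_independent res_basis" "\<And>ws. res_independent ws \<Longrightarrow> length ws \<le> length res_basis"
    by auto
qed

lemma res_basis_carrier: "set res_basis \<subseteq> carrier R" "\<forall>u\<in>set res_basis. val_ge u 0"
  using res_basis(1) L_closed(1)[OF L] unfolding res_independent_def by auto

text \<open>By maximality of \<open>res_basis\<close>, adjoining an integral \<open>x\<close> creates a residual dependence, in which
  the coefficient of \<open>x\<close> is a unit.\<close>

lemma res_basis_spans:
  assumes x: "x \<in> L" "val_ge x 0"
  shows "\<exists>ks. set ks \<subseteq> K \<and> length ks = length res_basis \<and> (\<forall>k\<in>set ks. val_ge k 0) \<and>
    val_pos (x \<ominus> combine ks res_basis)"
proof -
  note u0 = res_basis_carrier
  have xc: "x \<in> carrier R" using x L_closed(1)[OF L] by auto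
  have "\<not> res_independent (x # res_basis)" using res_basis(2)[of "x # res_basis"] by auto
  then obtain cks where cks: "set cks \<subseteq> K" "length cks = Suc (length res_basis)" "\<forall>k\<in>set cks. val_ge k 0"
    "val_pos (combine cks (x # res_basis))" "\<exists>k\<in>set cks. \<not> val_pos k"
    using x res_basis(1) unfolding res_independent_def by auto
  then obtain c ks where cks_eq: "cks = c # ks" by (cases cks) auto
  have c: "c \<in> K" "val_ge c 0" and ks: "set ks \<subseteq> K" "length ks = length res_basis"
    "\<forall>k\<in>set ks. val_ge k 0" and tot: "val_pos (c \<otimes> x \<oplus> combine ks res_basis)"
    and nonres: "\<not> val_pos c \<or> (\<exists>k\<in>set ks. \<not> val_pos k)"
    using cks unfolding cks_eq by auto
  define t where "t = combine ks res_basis"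
  have cc: "c \<in> carrier R" and ksc: "set ks \<subseteq> carrier R" using c ks K_closed(1) by auto
  then have tc: "t \<in> carrier R" unfolding t_def using u0 by simp
  have "\<not> val_pos c"
  proof
    assume "val_pos c"
    then have "val_pos (c \<otimes> x)" using val_pos_mult[OF cc xc _ x(2)] by simp
    moreover have "t = (c \<otimes> x \<oplus> t) \<ominus> c \<otimes> x" using cc xc tc by algebra
    ultimately have "val_pos t" using val_pos_diff[of "c \<otimes> x \<oplus> t" "c \<otimes> x"] tot cc xc tc by (simp add: t_def)
    then show False using res_basis(1) ks nonres \<open>val_pos c\<close> unfolding res_independent_def t_def by auto
  qed
  then have c0: "c \<noteq> \<zero>" "v c = 0" using c(2) unfolding val_pos_def val_ge_def by auto
  note ic = inv_nonzero[OF cc c0(1)]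
  have icv: "v (inv c) = 0" using val_inv[OF cc c0(1)] c0 by simp
  define ks2 where "ks2 = map (\<lambda>k. \<ominus> (inv c \<otimes> k)) ks"
  have "set ks2 \<subseteq> K" unfolding ks2_def using ks c c0 K_closed(4,6,8) by auto
  moreover have "\<forall>k\<in>set ks2. val_ge k 0"
  proof
    fix k assume "k \<in> set ks2"
    then obtain k' where k': "k' \<in> set ks" "k = \<ominus> (inv c \<otimes> k')" unfolding ks2_def by auto
    have "val_ge (inv c) 0" using icv unfolding val_ge_def by simp
    then have "val_ge (inv c \<otimes> k') (0 + 0)" using val_ge_mult ic(1) ksc ks(3) k'(1) by blast
    then show "val_ge k 0" using k' ic(1) ksc val_ge_uminus_iff by auto
  qed
  moreover have "x \<ominus> combine ks2 res_basis = inv c \<otimes> (c \<otimes> x \<oplus> t)"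
    unfolding ks2_def t_def combine_uminus_mult[OF ksc u0(1) ic(1)]
    using ic xc tc cc unfolding t_def[symmetric] by (simp add: minus_eq r_distr m_assoc[symmetric])
  then have "val_pos (x \<ominus> combine ks2 res_basis)"
    using val_pos_mult[of "c \<otimes> x \<oplus> t" "inv c"] tot ic xc tc cc icv by (simp add: m_comm val_ge_def t_def)
  moreover have "length ks2 = length res_basis" using ks(2) unfolding ks2_def by simp
  ultimately show ?thesis by blast
qed

lemma res_basis_repr:
  assumes x: "x \<in> L" "val_ge x 0"
  shows "\<exists>ss. set ss \<subseteq> residue_reps \<and> length ss = length res_basis \<and> val_pos (x \<ominus> combine ss res_basis)"
proof -
  obtain ks where ks: "set ks \<subseteq> K" "length ks = length res_basis" "\<forall>k\<in>set ks. val_ge k 0"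
    and sm1: "val_pos (x \<ominus> combine ks res_basis)"
    using res_basis_spans[OF x] by blast
  define rep where "rep k = (SOME s. s \<in> residue_reps \<and> val_pos (k \<ominus> s))" for k
  have rep: "rep k \<in> residue_reps \<and> val_pos (k \<ominus> rep k)" if "k \<in> K" "val_ge k 0" for k
    using residue_reps(4)[OF that] unfolding rep_def Bex_def by (rule someI_ex)
  have ksc: "set ks \<subseteq> carrier R" using ks K_closed(1) by auto
  have "rep k \<in> carrier R" if "k \<in> set ks" for k
    using rep[of k] ks that residue_reps(2) K_closed(1) by auto
  then have repc: "set (map rep ks) \<subseteq> carrier R" by auto
  have "val_pos (combine ks res_basis \<ominus> combine (map rep ks) res_basis)"
    using val_pos_combine_diff[OF ksc res_basis_carrier, of rep] rep ks residue_reps(2) K_closed(1) by blast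
  then have "val_pos (x \<ominus> combine (map rep ks) res_basis)"
    using val_pos_diff_trans[OF _ _ _ sm1] x L_closed(1)[OF L] ksc repc res_basis_carrier(1) by auto
  then show ?thesis using rep ks by (intro exI[of _ "map rep ks"]) auto
qed

text \<open>The residue field of \<open>L\<close> is finite, so two powers of a unit have the same residue.\<close>

lemma unit_power_near_one:
  assumes u: "u \<in> L" "u \<noteq> \<zero>" "v u = 0"
  shows "\<exists>N::nat>0. val_pos (u [^] N \<ominus> \<one>)"
proof -
  have uc: "u \<in> carrier R" using u L_closed(1)[OF L] by auto
  have upow: "u [^] j \<in> L" "u [^] j \<in> carrier R" "u [^] j \<noteq> \<zero>" "v (u [^] j) = 0" for j :: nat
    using L_closed(9)[OF L u(1)] uc u val_pow[OF uc u(2)] nonzero_pow[OF uc u(2)] by auto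
  define S where "S = {ss. set ss \<subseteq> residue_reps \<and> length ss = length res_basis}"
  have "finite S" unfolding S_def using residue_reps(1) finite_lists_length_eq by blast
  define rep where "rep j = (SOME ss. ss \<in> S \<and> val_pos (u [^] j \<ominus> combine ss res_basis))" for j :: nat
  have rep: "rep j \<in> S \<and> val_pos (u [^] j \<ominus> combine (rep j) res_basis)" for j
  proof -
    have "\<exists>ss. ss \<in> S \<and> val_pos (u [^] j \<ominus> combine ss res_basis)"
      using res_basis_repr[OF upow(1), of j] upow(4) unfolding S_def val_ge_def by auto
    then show ?thesis unfolding rep_def by (rule someI_ex)
  qed
  have "\<not> inj_on rep {0..card S}"
  proof
    assume "inj_on rep {0..card S}"
    moreover have "rep ` {0..card S} \<subseteq> S" using rep by auto
    ultimately have "card {0..card S} \<le> card S" using card_inj_on_le \<open>finite S\<close> by blast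
    then show False by simp
  qed
  then obtain i j where "i \<noteq> j" "rep i = rep j" unfolding inj_on_def by blast
  then obtain a b where ab: "a < b" "rep a = rep b" by (metis linorder_neqE_nat)
  define c where "c = combine (rep a) res_basis"
  have cc: "c \<in> carrier R"
    using rep[of a] res_basis_carrier residue_reps(2) K_closed(1) unfolding S_def c_def by auto
  have "val_pos (u [^] a \<ominus> c)" "val_pos (c \<ominus> u [^] b)"
    using rep[of a] rep[of b] ab(2) val_pos_diff_commute[OF upow(2) cc] unfolding c_def by auto
  then have "val_pos (u [^] a \<ominus> u [^] b)" using val_pos_diff_trans[OF upow(2) cc upow(2)] by blast
  moreover have "u [^] a \<ominus> u [^] b = \<ominus> (u [^] (b - a) \<ominus> \<one>) \<otimes> u [^] a"
  proof -
    have "u [^] b = u [^] a \<otimes> u [^] (b - a)" using ab(1) uc by (simp add: nat_pow_mult)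
    then show ?thesis using upow(2)[of a] upow(2)[of "b - a"] by algebra
  qed
  ultimately have "val_pos (\<ominus> (u [^] (b - a) \<ominus> \<one>) \<otimes> u [^] a \<otimes> inv (u [^] a))"
    using val_pos_mult[of _ "inv (u [^] a)"] inv_nonzero[OF upow(2,3)] val_inv[OF upow(2,3)] upow(4) uc
    by (simp add: val_ge_def)
  then have "val_pos (u [^] (b - a) \<ominus> \<one>)"
    using inv_nonzero[OF upow(2,3)] uc val_pos_uminus_iff by (simp add: m_assoc)
  then show ?thesis using ab(1) by (intro exI[of _ "b - a"]) auto
qed

lemma unit_power_near_one_coprime:
  assumes u: "u \<in> L" "u \<noteq> \<zero>" "v u = 0"
  shows "\<exists>N::nat>0. \<not> p dvd N \<and> val_pos (u [^] N \<ominus> \<one>)"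
proof -
  have uc: "u \<in> carrier R" using u L_closed(1)[OF L] by auto
  obtain N :: nat where N: "N > 0" "val_pos (u [^] N \<ominus> \<one>)" using unit_power_near_one[OF u] by blast
  have "\<not> is_unit p" using prime_p not_prime_unit by blast
  then obtain N' where N': "N = p ^ multiplicity p N * N'" "\<not> p dvd N'"
    using multiplicity_decompose'[of N p] N(1) by auto
  have "u [^] N \<ominus> \<one> = (u [^] N') [^] (p ^ multiplicity p N) \<ominus> \<one> [^] (p ^ multiplicity p N)"
    using uc N'(1) by (simp add: nat_pow_pow mult.commute)
  also have "\<dots> = (u [^] N' \<ominus> \<one>) [^] (p ^ multiplicity p N)" using frobenius_pow_diff uc by simp
  finally have "val_pos (u [^] N' \<ominus> \<one>)"
    using N(2) val_pos_pow_imp_val_pos[of "u [^] N' \<ominus> \<one>"] uc prime_gt_0_nat[OF prime_p] by simp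
  moreover have "N' > 0" using N(1) N'(1) by (cases "N' = 0") auto
  ultimately show ?thesis using N'(2) by blast
qed

end

end

section \<open>Roots of units modulo roots of unity\<close>

lemma coprime_imp_dvd_power_minus_one:
  fixes a M :: nat
  assumes "coprime a M"
  shows "\<exists>f>0. M dvd a ^ f - 1"
proof (cases "a \<le> 1 \<or> M = 0")
  case True
  then have "a = 1 \<or> M = 1" using assms by (auto simp: le_Suc_eq)
  then show ?thesis by (intro exI[of _ 1]) auto
next
  case False
  then have a: "a > 0" and M: "M > 0" by auto
  have "\<not> inj_on (\<lambda>i. a ^ i mod M) {0..M}"
  proof
    assume "inj_on (\<lambda>i. a ^ i mod M) {0..M}"
    then have "card {0..M} \<le> card {0..<M}"
      by (rule card_inj_on_le) (use M in auto)
    then show False by simp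
  qed
  then obtain i j where ij: "i < j" "a ^ i mod M = a ^ j mod M"
    unfolding inj_on_def by (metis linorder_neqE_nat)
  have "a ^ i \<le> a ^ j" using ij a by (simp add: power_increasing)
  then have "M dvd a ^ j - a ^ i" using ij mod_eq_dvd_iff_nat by metis
  moreover have "a ^ j - a ^ i = a ^ i * (a ^ (j - i) - 1)"
    using ij by (simp add: diff_mult_distrib2 power_add[symmetric])
  moreover have "coprime M (a ^ i)" using assms by (simp add: coprime_commute)
  ultimately have "M dvd a ^ (j - i) - 1" using coprime_dvd_mult_right_iff by metis
  then show ?thesis using ij by (intro exI[of _ "j - i"]) auto
qed

context valued_field
begin

lemma vcauchy_if_diff_Suc_val_ge:
  assumes f: "\<And>t. f t \<in> carrier R" and d: "d > 0"
    and step: "\<And>t. val_ge (f (Suc t) \<ominus> f t) (real t * d)"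
  shows "vcauchy R v f"
proof -
  have tail: "val_ge (f j \<ominus> f l) (real l * d)" if "l \<le> j" for l j
    using that
  proof (induct j)
    case (Suc j)
    show ?case
    proof (cases "l = Suc j")
      case False
      then have "l \<le> j" using Suc.prems by simp
      then have "val_ge (f (Suc j) \<ominus> f j) (real l * d)" "val_ge (f j \<ominus> f l) (real l * d)"
        using val_ge_mono[OF step[of j]] Suc.hyps d by (auto intro: mult_right_mono)
      then show ?thesis using val_ge_diff_trans f by blast
    qed (use f in \<open>simp add: minus_eq r_neg\<close>)
  qed (use f in \<open>simp add: minus_eq r_neg\<close>)
  show ?thesis
    unfolding vcauchy_iff[of f, OF f]
  proof
    fix M
    obtain T :: nat where "M / d \<le> real T" using real_nat_ceiling_ge by blast
    then have T: "M \<le> real T * d" using d by (simp add: field_simps)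
    have "val_ge (f i \<ominus> f j) M" if "T \<le> i" "T \<le> j" for i j
    proof -
      have "real T * d \<le> real (min i j) * d" using that d by (simp add: mult_right_mono)
      moreover have "val_ge (f i \<ominus> f j) (real (min i j) * d)"
        using tail[of j i] tail[of i j] val_ge_diff_commute[OF f f] by (cases "j \<le> i") (auto simp: min_def)
      ultimately show ?thesis using T val_ge_mono by (meson order_trans)
    qed
    then show "\<exists>N. \<forall>i\<ge>N. \<forall>j\<ge>N. val_ge (f i \<ominus> f j) M" by blast
  qed
qed

lemma vconverges_val_eq:
  assumes f: "\<And>t. f t \<in> carrier R" "\<And>t. f t \<noteq> \<zero>" "\<And>t. v (f t) = r"
    and c: "c \<in> carrier R" "vconverges R v f c"
  shows "c \<noteq> \<zero> \<and> v c = r"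
proof -
  obtain T where T: "val_ge (f T \<ominus> c) (r + 1)"
    using c vconverges_iff[of f c, OF f(1) c(1)] by blast
  show ?thesis
  proof (cases "f T \<ominus> c = \<zero>")
    case True
    then show ?thesis using f c(1) r_right_minus_eq by metis
  next
    case False
    have "c = f T \<oplus> \<ominus> (f T \<ominus> c)" using f(1)[of T] c(1) by algebra
    moreover have "v (f T) < v (\<ominus> (f T \<ominus> c))"
      using T False val_uminus[of "f T \<ominus> c"] f(1,3) c(1) unfolding val_ge_def by simp
    ultimately show ?thesis
      using val_add_eq_left[of "f T" "\<ominus> (f T \<ominus> c)"] f c(1) False by (simp add: a_inv_closed)
  qed
qed

lemma vconverges_pow_fixed:
  assumes f: "\<And>t. f t \<in> carrier R" "\<And>t. val_ge (f t) 0" "\<And>t. f (Suc t) = f t [^] (q::nat)"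
    and x: "x \<in> carrier R" "val_ge x 0" "vconverges R v f x"
  shows "x [^] q = x"
proof -
  have "vconverges R v (\<lambda>t. f (Suc t)) (x [^] q)"
    using vconverges_pow[OF f(1,2) x, of q] f(3) by simp
  moreover have "vconverges R v (\<lambda>t. f (Suc t)) x" using vconverges_Suc[OF f(1) x(1,3)] .
  ultimately show ?thesis using vconverges_unique[of "\<lambda>t. f (Suc t)"] f(1) x(1) by simp
qed

end

lemma (in field) root_of_unity_if_pow_eq_self:
  assumes "x \<in> carrier R" "x \<noteq> \<zero>" "x [^] q = x" "q > (1::nat)"
  shows "root_of_unity R x"
proof -
  have "x [^] (q - 1) \<otimes> x = \<one> \<otimes> x"
    using assms by (simp add: nat_pow_Suc[symmetric])
  then have "x [^] (q - 1) = \<one>" using assms(1,2) m_rcancel by (metis nat_pow_closed one_closed)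
  then show ?thesis unfolding root_of_unity_def using assms by (intro conjI exI[of _ "q - 1"]) auto
qed

context CP_setting
begin

lemma vcauchy_frobenius_partial_prods:
  assumes w: "w \<in> carrier R" "v w = 0" "val_pos (w \<ominus> \<one>)" and q: "q = p ^ f" "f > 0"
  shows "vcauchy R v (\<lambda>t. w [^] (\<Sum>i<t. q ^ i))"
proof -
  obtain d where d: "d > 0" "val_ge (w \<ominus> \<one>) d"
    using w(3) unfolding val_pos_def val_ge_def by (metis order_refl zero_less_one)
  have "q \<ge> 2" using q prime_gt_1_nat[OF prime_p] self_le_power[of p f] by simp
  have "val_ge (w [^] (\<Sum>i<Suc t. q ^ i) \<ominus> w [^] (\<Sum>i<t. q ^ i)) (real t * d)" for t
  proof -
    have "w [^] (\<Sum>i<Suc t. q ^ i) = w [^] (\<Sum>i<t. q ^ i) \<otimes> w [^] (q ^ t)"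
      using w(1) by (simp add: nat_pow_mult)
    then have "w [^] (\<Sum>i<Suc t. q ^ i) \<ominus> w [^] (\<Sum>i<t. q ^ i)
        = w [^] (\<Sum>i<t. q ^ i) \<otimes> (w [^] (q ^ t) \<ominus> \<one>)"
      using w(1) nat_pow_closed[OF w(1), of "\<Sum>i<t. q ^ i"] nat_pow_closed[OF w(1), of "q ^ t"] by algebra
    also have "w [^] (q ^ t) \<ominus> \<one> = (w \<ominus> \<one>) [^] (q ^ t)"
      using frobenius_pow_diff[OF w(1) one_closed, of "f * t"] unfolding q(1) power_mult by simp
    finally have eq: "w [^] (\<Sum>i<Suc t. q ^ i) \<ominus> w [^] (\<Sum>i<t. q ^ i)
        = w [^] (\<Sum>i<t. q ^ i) \<otimes> (w \<ominus> \<one>) [^] (q ^ t)" .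
    have "real t \<le> real (q ^ t)"
      using less_exp[of t] power_mono[OF \<open>q \<ge> 2\<close>, of t] by linarith
    moreover have "val_ge ((w \<ominus> \<one>) [^] (q ^ t)) (real (q ^ t) * d)"
      using val_ge_pow[of "w \<ominus> \<one>" d "q ^ t"] w(1) d by simp
    ultimately have "val_ge ((w \<ominus> \<one>) [^] (q ^ t)) (real t * d)"
      using val_ge_mono d(1) by (meson mult_right_mono less_imp_le)
    moreover have "val_ge (w [^] (\<Sum>i<t. q ^ i)) 0"
      using val_ge_pow[of w 0] w(1,2) unfolding val_ge_def by simp
    ultimately show ?thesis
      unfolding eq using val_ge_mult[of "w [^] (\<Sum>i<t. q ^ i)" _ 0] w(1) by simp
  qed
  then show ?thesis
    using vcauchy_if_diff_Suc_val_ge[of "\<lambda>t. w [^] (\<Sum>i<t. q ^ i)" d] d(1) w(1) by simp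
qed

lemma geometric_sum_nat:
  fixes q :: nat
  assumes "q \<ge> 1"
  shows "(q - 1) * (\<Sum>i<t. q ^ i) + 1 = q ^ t"
proof -
  obtain r where "q = Suc r" using assms by (cases q) auto
  then show ?thesis by (induct t) (simp_all add: algebra_simps)
qed

context
  fixes L assumes L: "finite_ext R K L"
begin

text \<open>The limit \<open>D\<close> of \<open>z\<^bsup>q\<^sup>t\<^esup>\<close> is a root of unity (the Teichmueller representative of \<open>z\<close>), and
  \<open>D / z\<close> is the \<open>m\<close>-th power of the limit of \<open>z\<^bsup>g (1 + q + \<dots> + q\<^bsup>t - 1\<^esup>)\<^esup>\<close>.\<close>

lemma root_mod_roots_of_unity_if_near_one:
  assumes z: "z \<in> L" "z \<noteq> \<zero>" "v z = 0" and q: "q = p ^ f" "f > 0" "g * m = q - 1"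
    and near_one: "val_pos (z [^] g \<ominus> \<one>)"
  shows "\<exists>c\<in>L. c \<noteq> \<zero> \<and> root_of_unity R (c [^] m \<otimes> z)"
proof -
  have zc: "z \<in> carrier R" using z L_closed(1)[OF L] by auto
  define w where "w = z [^] g"
  have w: "w \<in> L" "w \<in> carrier R" "w \<noteq> \<zero>" "v w = 0"
    unfolding w_def using z zc L_closed(9)[OF L] nonzero_pow val_pow by auto
  define cs where "cs t = w [^] (\<Sum>i<t. q ^ i)" for t
  have cs: "cs t \<in> L" "cs t \<in> carrier R" "cs t \<noteq> \<zero>" "v (cs t) = 0" for t
    unfolding cs_def using w L_closed(9)[OF L] nonzero_pow val_pow by auto
  have "vcauchy R v cs"
    unfolding cs_def using vcauchy_frobenius_partial_prods[OF w(2,4) _ q(1,2)] near_one w_def by simp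
  then obtain c where c: "c \<in> L" "vconverges R v cs c"
    using vcomplete_L[OF L] cs(1) unfolding vcomplete_def by blast
  have cc: "c \<in> carrier R" using c L_closed(1)[OF L] by auto
  have c0: "c \<noteq> \<zero> \<and> v c = 0" using vconverges_val_eq[OF cs(2,3,4) cc c(2)] .
  define D where "D t = cs t [^] m \<otimes> z" for t
  have "q \<ge> 1" using q(1) prime_gt_0_nat[OF prime_p] by simp
  have D_eq: "D t = z [^] (q ^ t)" for t
  proof -
    have e: "g * (\<Sum>i<t. q ^ i) * m = (q - 1) * (\<Sum>i<t. q ^ i)" using q(3) by (metis mult.assoc mult.commute)
    have "D t = z [^] (g * (\<Sum>i<t. q ^ i) * m) \<otimes> z"
      unfolding D_def cs_def w_def using zc by (simp add: nat_pow_pow)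
    also have "\<dots> = z [^] ((q - 1) * (\<Sum>i<t. q ^ i) + 1)"
      unfolding e using zc by (simp add: nat_pow_mult[symmetric])
    finally show ?thesis unfolding geometric_sum_nat[OF \<open>q \<ge> 1\<close>] .
  qed
  have D: "D t \<in> carrier R" "val_ge (D t) 0" "D (Suc t) = D t [^] q" for t
    unfolding D_eq using zc z(2,3) val_pow nonzero_pow by (auto simp: val_ge_def nat_pow_pow mult.commute)
  have "vconverges R v D (z \<otimes> c [^] m)"
    using vconverges_mult_left[OF _ _ zc vconverges_pow[OF cs(2) _ cc _ c(2), of m]] cs c0 zc cc
    unfolding D_def by (simp add: val_ge_def m_comm)
  moreover have "val_ge (z \<otimes> c [^] m) 0" using c0 z(2,3) cc zc val_mult val_pow nonzero_pow by (simp add: val_ge_def)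
  ultimately have "(z \<otimes> c [^] m) [^] q = z \<otimes> c [^] m"
    using vconverges_pow_fixed[of D q, OF D] zc cc by simp
  moreover have "q > 1" using q(1,2) prime_gt_1_nat[OF prime_p] one_less_power by blast
  moreover have "z \<otimes> c [^] m \<noteq> \<zero>" using zc cc c0 z(2) nonzero_mult nonzero_pow by simp
  ultimately have "root_of_unity R (z \<otimes> c [^] m)" using root_of_unity_if_pow_eq_self zc cc by simp
  then show ?thesis using c(1) c0 zc cc by (auto simp: m_comm)
qed

lemma unit_root_mod_roots_of_unity:
  assumes u: "u \<in> L" "u \<noteq> \<zero>" "v u = 0" and m: "\<not> p dvd m"
  shows "\<exists>c\<in>L. c \<noteq> \<zero> \<and> root_of_unity R (c [^] m \<otimes> inv u)"
proof -
  have uc: "u \<in> carrier R" using u L_closed(1)[OF L] by auto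
  have z: "inv u \<in> L" "inv u \<noteq> \<zero>" "v (inv u) = 0"
    using u uc L_closed(8)[OF L] inv_nonzero val_inv by auto
  have zc: "inv u \<in> carrier R" using inv_nonzero uc u by auto
  obtain N :: nat where N: "N > 0" "\<not> p dvd N" "val_pos (inv u [^] N \<ominus> \<one>)"
    using unit_power_near_one_coprime[OF L z] by blast
  have "coprime p (N * m)" using prime_p N(2) m by (simp add: prime_imp_coprime)
  then obtain f where f: "f > 0" "N * m dvd p ^ f - 1"
    using coprime_imp_dvd_power_minus_one by blast
  then obtain t0 where t0: "p ^ f - 1 = N * m * t0" by blast
  have "val_ge (inv u [^] N) 0" using val_pow[OF zc z(2)] z(3) by (simp add: val_ge_def)
  then have "val_pos ((inv u [^] N) [^] t0 \<ominus> \<one>)" using val_pos_pow_minus_one[OF _ _ N(3)] zc by simp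
  then have near: "val_pos (inv u [^] (N * t0) \<ominus> \<one>)" using zc by (simp add: nat_pow_pow)
  have "N * t0 * m = p ^ f - 1" using t0 by simp
  from root_mod_roots_of_unity_if_near_one[OF z refl f(1) this near] show ?thesis .
qed

end

end

lemma (in char_p_cring) exists_purely_insep_root:
  assumes alg_closed: "algebraically_closed R" and L: "subfield L R" "c \<in> L"
  shows "\<exists>L1. purely_insep_finite_ext R p L L1 \<and> (\<exists>b\<in>L1. b [^] (p ^ s) = c)"
proof -
  interpret field R using alg_closed algebraically_closed.axioms(1) by blast
  have ps: "p ^ s > 0" using prime_gt_0_nat[OF prime_p] by simp
  have Lc: "L \<subseteq> carrier R" using subfieldE(3)[OF L(1)] .
  obtain b where b: "b \<in> carrier R" "b [^] (p ^ s) = c"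
    using nth_root_exists[OF alg_closed _ ps] L Lc by blast
  have "pow_minus_poly (p ^ s) c \<noteq> []" by (simp add: pow_minus_poly_def)
  moreover have "eval (pow_minus_poly (p ^ s) c) b = \<zero>"
    using eval_pow_minus_poly[OF _ b(1) ps, of c] b L Lc by (auto simp: minus_eq r_neg)
  ultimately have alg: "(algebraic over L) b"
    using algebraicI[OF pow_minus_poly_carrier[OF subfieldE(1)[OF L(1)] L(2) ps]] by blast
  define L1 where "L1 = simple_extension L b"
  have "subfield L1 R" "finite_dimension L L1"
    unfolding L1_def using simple_extension_is_subfield[OF L(1) b(1)]
      finite_dimension_simple_extension[OF L(1) b(1)] alg by simp_all
  moreover have "L \<subseteq> L1" "b \<in> L1" unfolding L1_def
    using simple_extension_incl[OF Lc b(1)] simple_extension_mem[OF subfieldE(1)[OF L(1)] b(1)] by simp_all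
  moreover have "x [^] (p ^ s) \<in> L" if "x \<in> L1" for x
    using that unfolding L1_def
  proof (induct x rule: simple_extension.induct)
    case zero
    then show ?case using subfield_closed(2)[OF L(1)] ps by (simp add: nat_pow_zero)
  next
    case (lin k1 k2)
    have "k1 \<in> carrier R" "k2 \<in> carrier R"
      using lin simple_extension_in_carrier[OF Lc b(1)] Lc by auto
    then have "(k1 \<otimes> b \<oplus> k2) [^] (p ^ s) = k1 [^] (p ^ s) \<otimes> c \<oplus> k2 [^] (p ^ s)"
      using frobenius_pow_add b by (simp add: nat_pow_distrib)
    then show ?case using lin L subfield_closed[OF L(1)] by simp
  qed
  ultimately have "purely_insep_finite_ext R p L L1"
    unfolding purely_insep_finite_ext_def finite_ext_def by blast
  then show ?thesis using \<open>b \<in> L1\<close> b(2) by blast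
qed

context CP_setting
begin

lemma power_times_unit_if_vL_in_multiples:
  assumes L: "finite_ext R K L" and a: "a \<in> K" "a \<noteq> \<zero>" and n: "n > 0"
    and val: "\<exists>k::int. vL R v L a = real n * real_of_int k"
  shows "\<exists>\<pi>\<in>L. \<exists>u\<in>L. \<pi> \<noteq> \<zero> \<and> u \<noteq> \<zero> \<and> v u = 0 \<and> a = \<pi> [^] n \<otimes> u"
proof -
  obtain k :: int where k: "real (ram_index R v L) * v a = real n * real_of_int k"
    using val unfolding vL_def by blast
  have "v a / real n = real_of_int k / real (ram_index R v L)"
    using k ram_index_finite_ext[OF L] n by (simp add: field_simps)
  then have "v a / real n \<in> value_group L" using ram_index_finite_ext[OF L] by auto
  then obtain \<pi> where "\<pi> \<in> L - {\<zero>}" "v a / real n = v \<pi>" unfolding value_group_def by blast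
  then have \<pi>: "\<pi> \<in> L" "\<pi> \<noteq> \<zero>" "v \<pi> = v a / real n" by auto
  have \<pi>c: "\<pi> [^] n \<in> carrier R" "\<pi> [^] n \<noteq> \<zero>" "v (\<pi> [^] n) = v a"
    using \<pi> L_closed(1)[OF L] n nonzero_pow val_pow by auto
  have ac: "a \<in> carrier R" using a K_closed(1) by auto
  define u where "u = inv (\<pi> [^] n) \<otimes> a"
  have "u \<in> L" unfolding u_def using \<pi> a K_subset_L[OF L] L_closed[OF L] \<pi>c by auto
  moreover have "u \<noteq> \<zero>" "v u = 0"
    unfolding u_def using inv_nonzero[OF \<pi>c(1,2)] ac a(2) nonzero_mult val_mult val_inv[OF \<pi>c(1,2)] \<pi>c(3)
    by auto
  moreover have "a = \<pi> [^] n \<otimes> u" unfolding u_def using inv_nonzero[OF \<pi>c(1,2)] ac \<pi>c by (simp add: m_assoc[symmetric])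
  ultimately show ?thesis using \<pi> by blast
qed

lemma nth_root_in_purely_insep_ext:
  assumes L: "finite_ext R K L" and n: "n > 0" and a: "a \<in> K" "a \<noteq> \<zero>"
    and val: "\<exists>k::int. vL R v L a = real n * real_of_int k"
  shows "\<exists>L1. purely_insep_finite_ext R p L L1 \<and> (\<exists>b \<in> L1 - {\<zero>}. pos_class R (b [^] n) = pos_class R a)"
proof -
  obtain \<pi> u where \<pi>: "\<pi> \<in> L" "\<pi> \<noteq> \<zero>" and u: "u \<in> L" "u \<noteq> \<zero>" "v u = 0"
    and a_eq: "a = \<pi> [^] n \<otimes> u"
    using power_times_unit_if_vL_in_multiples[OF L a n val] by blast
  have "\<not> is_unit p" using prime_p not_prime_unit by blast
  then obtain s m where m: "n = p ^ s * m" "\<not> p dvd m"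
    using multiplicity_decompose'[of n p] n by blast
  obtain c where c: "c \<in> L" "c \<noteq> \<zero>" "root_of_unity R (c [^] m \<otimes> inv u)"
    using unit_root_mod_roots_of_unity[OF L u m(2)] by blast
  obtain L1 b where L1: "purely_insep_finite_ext R p L L1" and b: "b \<in> L1" "b [^] (p ^ s) = c"
    using exists_purely_insep_root[OF alg_closed subfield_L[OF L] c(1)] by blast
  have L1_sub: "subfield L1 R" "L \<subseteq> L1" using L1 unfolding purely_insep_finite_ext_def finite_ext_def by auto
  have carrier: "\<pi> \<in> carrier R" "u \<in> carrier R" "b \<in> carrier R" "a \<in> carrier R" "c \<in> carrier R"
    using \<pi> u b a c L_closed(1)[OF L] subfield_closed(1)[OF L1_sub(1)] K_closed(1) by auto
  have "(\<pi> \<otimes> b) [^] n = \<pi> [^] n \<otimes> c [^] m"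
    using carrier b(2) unfolding m(1) by (simp add: nat_pow_distrib nat_pow_pow[symmetric])
  also have "\<dots> = a \<otimes> (c [^] m \<otimes> inv u)"
    unfolding a_eq using carrier inv_nonzero[OF carrier(2) u(2)] by (simp add: m_assoc m_lcomm[of u "c [^] m"])
  finally have "pos_class R ((\<pi> \<otimes> b) [^] n) = pos_class R a"
    using pos_class_mult_root_of_unity[OF carrier(4) a(2) c(3)] by simp
  moreover have "\<pi> \<otimes> b \<in> L1 - {\<zero>}"
  proof -
    have "b \<noteq> \<zero>" using b(2) c(2) prime_gt_0_nat[OF prime_p] by (auto simp: nat_pow_zero)
    then show ?thesis using \<pi> b(1) carrier L1_sub subfield_closed(4)[OF L1_sub(1)] nonzero_mult by auto
  qed
  ultimately show ?thesis using L1 by blast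
qed

end

theorem lemma2p3:
  fixes R :: "('a, 'b) ring_scheme" and v :: "'a \<Rightarrow> real" and p :: nat
    and K L :: "'a set" and n :: nat and a :: 'a
  assumes cp: "CP_setup R v p K"
    and L: "finite_ext R K L"
    and n: "n > 0"
    and a: "a \<in> K" "a \<noteq> \<zero>\<^bsub>R\<^esub>"
    and val: "\<exists>k::int. vL R v L a = real n * real_of_int k"
  shows "\<exists>L1. purely_insep_finite_ext R p L L1 \<and>
           (\<exists>b \<in> L1 - {\<zero>\<^bsub>R\<^esub>}. pos_class R (b [^]\<^bsub>R\<^esub> n) = pos_class R a)"
proof -
  interpret CP_setting R v p K by (rule CP_setting.intro[OF cp])
  show ?thesis using nth_root_in_purely_insep_ext[OF L n a val] .
qed

end
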